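(* Let $\mathcal N$ be a null structure on an oriented three-dimensional (pseudo-)Riemannian manifold $(\mathcal M,g)$ which at every point is a principal null structure of $\Phi_{ab}$ of multiplicity exactly $2$. Suppose that for a generator $k^a$ of $\mathcal N$, $$k^ak^b\left(A_{abc}+3g_{bc}\nabla_aS\right)=0.$$ Then $\mathcal N$ is co-geodetic.
   Context: Abstract index notation; $\nabla$ the Levi-Civita connection; brackets denote (skew-)symmetrisation with weight $1/2$. $R_{abd}{}^cV^d=2\nabla_{[a}\nabla_{b]}V^c$, $R_{ab}=R_{acb}{}^c$, $R=R_a{}^a$, $\Phi_{ab}=R_{ab}-\frac13Rg_{ab}$, $S=\frac1{12}R$, Cotton tensor $A_{abc}=-2\nabla_{[b}\Phi_{c]a}+2g_{a[b}\nabla_{c]}S$. $g,\nabla$ extended complex-(bi)linearly to $T^{\mathbb C}\mathcal M$. A null structure is a complex line subbundle $\mathcal N\subset T^{\mathbb C}\mathcal M$ with $g(k,k)=0$ for all sections; a generator is a nowhere-vanishing section; $\mathcal N^\perp$ its orthogonal complement. $\mathcal N$ is co-geodetic if $g(\nabla_XY,Z)=0$ for all sections $X,Y$ of $\mathcal N^\perp$, $Z$ of $\mathcal N$. Multiplicity: pick a frame $(k,\ell,n)$ with $g(k,\ell)=1$, $g(n,n)=-\frac12$, other pairings zero; $\Phi_0=\frac12\Phi_{ab}k^ak^b$, $\Phi_1=\frac12\Phi_{ab}k^an^b$, $\Phi_2=\frac12\Phi_{ab}k^a\ell^b$, $\Phi_3=\frac12\Phi_{ab}\ell^an^b$, $\Phi_4=\frac12\Phi_{ab}\ell^a\ell^b$;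 the multiplicity of $\mathcal N$ as principal null structure is the multiplicity of the root $z=0$ of $\Phi_0+4\Phi_1z+6\Phi_2z^2+4\Phi_3z^3+\Phi_4z^4$. Thus multiplicity exactly 2 means $\Phi_0=\Phi_1=0\neq\Phi_2$ (equivalently $k_{[a}\Phi_{b]c}k^c=0$ but $\Phi_{ab}k^b\neq0$). *)

theory Defs
  imports "HOL-Analysis.Analysis" "HOL-Computational_Algebra.Polynomial"
begin

text \<open>Local coordinate model: an open set U of R^3 (a coordinate chart of the
three-dimensional manifold), a metric given by a symmetric nondegenerate
matrix field G, complex vector fields as maps to complex^3.  Indices
range over the type 3.\<close>

definition pd :: "3 \<Rightarrow> (real^3 \<Rightarrow> 'b::real_normed_vector) \<Rightarrow> real^3 \<Rightarrow> 'b" where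
  "pd i f x = vector_derivative (\<lambda>t. f (x + t *\<^sub>R axis i 1)) (at 0)"

fun pds :: "3 list \<Rightarrow> (real^3 \<Rightarrow> 'b::real_normed_vector) \<Rightarrow> real^3 \<Rightarrow> 'b" where
  "pds [] f = f"
| "pds (i # is) f = pd i (pds is f)"

definition smooth_on :: "(real^3) set \<Rightarrow> (real^3 \<Rightarrow> 'b::real_normed_vector) \<Rightarrow> bool" where
  "smooth_on U f \<longleftrightarrow> (\<forall>is. \<forall>x\<in>U. pds is f differentiable (at x))"

definition smooth_metric :: "(real^3) set \<Rightarrow> (real^3 \<Rightarrow> real^3^3) \<Rightarrow> bool" where
  "smooth_metric U G \<longleftrightarrow> open U \<and>
     (\<forall>a b. smooth_on U (\<lambda>y. G y $ a $ b)) \<and>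
     (\<forall>x\<in>U. transpose (G x) = G x \<and> det (G x) \<noteq> 0)"

definition ginv :: "(real^3 \<Rightarrow> real^3^3) \<Rightarrow> real^3 \<Rightarrow> real^3^3" where
  "ginv G x = matrix_inv (G x)"

definition christ :: "(real^3 \<Rightarrow> real^3^3) \<Rightarrow> 3 \<Rightarrow> 3 \<Rightarrow> 3 \<Rightarrow> real^3 \<Rightarrow> real" where
  "christ G c a b x = (1/2) * (\<Sum>d\<in>UNIV. ginv G x $ c $ d *
      (pd a (\<lambda>y. G y $ d $ b) x + pd b (\<lambda>y. G y $ d $ a) x - pd d (\<lambda>y. G y $ a $ b) x))"

text \<open>R_{abd}^c with R_{abd}^c V^d = (nabla_a nabla_b - nabla_b nabla_a) V^c.\<close>
definition riem :: "(real^3 \<Rightarrow> real^3^3) \<Rightarrow> 3 \<Rightarrow> 3 \<Rightarrow> 3 \<Rightarrow> 3 \<Rightarrow> real^3 \<Rightarrow> real" where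
  "riem G a b d c x = pd a (christ G c b d) x - pd b (christ G c a d) x
     + (\<Sum>e\<in>UNIV. christ G c a e x * christ G e b d x - christ G c b e x * christ G e a d x)"

definition ricci :: "(real^3 \<Rightarrow> real^3^3) \<Rightarrow> 3 \<Rightarrow> 3 \<Rightarrow> real^3 \<Rightarrow> real" where
  "ricci G a b x = (\<Sum>c\<in>UNIV. riem G a c b c x)"

definition scal :: "(real^3 \<Rightarrow> real^3^3) \<Rightarrow> real^3 \<Rightarrow> real" where
  "scal G x = (\<Sum>a\<in>UNIV. \<Sum>b\<in>UNIV. ginv G x $ a $ b * ricci G a b x)"

definition Phi :: "(real^3 \<Rightarrow> real^3^3) \<Rightarrow> 3 \<Rightarrow> 3 \<Rightarrow> real^3 \<Rightarrow> real" where
  "Phi G a b x = ricci G a b x - (1/3) * scal G x * G x $ a $ b"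

definition Sfun :: "(real^3 \<Rightarrow> real^3^3) \<Rightarrow> real^3 \<Rightarrow> real" where
  "Sfun G x = scal G x / 12"

definition nablaPhi :: "(real^3 \<Rightarrow> real^3^3) \<Rightarrow> 3 \<Rightarrow> 3 \<Rightarrow> 3 \<Rightarrow> real^3 \<Rightarrow> real" where
  "nablaPhi G b c a x = pd b (Phi G c a) x
     - (\<Sum>e\<in>UNIV. christ G e b c x * Phi G e a x)
     - (\<Sum>e\<in>UNIV. christ G e b a x * Phi G c e x)"

definition cotton :: "(real^3 \<Rightarrow> real^3^3) \<Rightarrow> 3 \<Rightarrow> 3 \<Rightarrow> 3 \<Rightarrow> real^3 \<Rightarrow> real" where
  "cotton G a b c x = - (nablaPhi G b c a x - nablaPhi G c b a x)
     + G x $ a $ b * pd c (Sfun G) x - G x $ a $ c * pd b (Sfun G) x"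

definition gc :: "(real^3 \<Rightarrow> real^3^3) \<Rightarrow> real^3 \<Rightarrow> complex^3 \<Rightarrow> complex^3 \<Rightarrow> complex" where
  "gc G x u v = (\<Sum>a\<in>UNIV. \<Sum>b\<in>UNIV. complex_of_real (G x $ a $ b) * u $ a * v $ b)"

definition Phic :: "(real^3 \<Rightarrow> real^3^3) \<Rightarrow> real^3 \<Rightarrow> complex^3 \<Rightarrow> complex^3 \<Rightarrow> complex" where
  "Phic G x u v = (\<Sum>a\<in>UNIV. \<Sum>b\<in>UNIV. complex_of_real (Phi G a b x) * u $ a * v $ b)"

text \<open>The quartic Phi_0 + 4 Phi_1 z + 6 Phi_2 z^2 + 4 Phi_3 z^3 + Phi_4 z^4 w.r.t. frame (k,l,n).\<close>
definition phi_poly :: "(real^3 \<Rightarrow> real^3^3) \<Rightarrow> real^3 \<Rightarrow> complex^3 \<Rightarrow> complex^3 \<Rightarrow> complex^3 \<Rightarrow> complex poly" where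
  "phi_poly G x k l n =
     [: Phic G x k k / 2, 4 * (Phic G x k n / 2), 6 * (Phic G x k l / 2),
        4 * (Phic G x l n / 2), Phic G x l l / 2 :]"

definition null_frame :: "(real^3 \<Rightarrow> real^3^3) \<Rightarrow> real^3 \<Rightarrow> complex^3 \<Rightarrow> complex^3 \<Rightarrow> complex^3 \<Rightarrow> bool" where
  "null_frame G x k l n \<longleftrightarrow> gc G x k l = 1 \<and> gc G x n n = - 1/2 \<and>
     gc G x k k = 0 \<and> gc G x l l = 0 \<and> gc G x k n = 0 \<and> gc G x l n = 0"

definition principal_mult :: "(real^3 \<Rightarrow> real^3^3) \<Rightarrow> real^3 \<Rightarrow> complex^3 \<Rightarrow> nat \<Rightarrow> bool" where
  "principal_mult G x k m \<longleftrightarrow> (\<exists>l n. null_frame G x k l n \<and>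
     phi_poly G x k l n \<noteq> 0 \<and> order 0 (phi_poly G x k l n) = m)"

definition covD :: "(real^3 \<Rightarrow> real^3^3) \<Rightarrow> (real^3 \<Rightarrow> complex^3) \<Rightarrow> (real^3 \<Rightarrow> complex^3) \<Rightarrow> real^3 \<Rightarrow> complex^3" where
  "covD G X Y x = (\<chi> c. \<Sum>a\<in>UNIV. X x $ a *
      (pd a (\<lambda>y. Y y $ c) x + (\<Sum>b\<in>UNIV. complex_of_real (christ G c a b x) * Y x $ b)))"

definition smooth_field :: "(real^3) set \<Rightarrow> (real^3 \<Rightarrow> complex^3) \<Rightarrow> bool" where
  "smooth_field U X \<longleftrightarrow> (\<forall>a. smooth_on U (\<lambda>y. X y $ a))"

text \<open>A null structure given by a smooth nowhere-vanishing null generator k.\<close>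
definition null_generator :: "(real^3) set \<Rightarrow> (real^3 \<Rightarrow> real^3^3) \<Rightarrow> (real^3 \<Rightarrow> complex^3) \<Rightarrow> bool" where
  "null_generator U G k \<longleftrightarrow> smooth_field U k \<and>
     (\<forall>x\<in>U. k x \<noteq> 0 \<and> gc G x (k x) (k x) = 0)"

definition co_geodetic :: "(real^3) set \<Rightarrow> (real^3 \<Rightarrow> real^3^3) \<Rightarrow> (real^3 \<Rightarrow> complex^3) \<Rightarrow> bool" where
  "co_geodetic U G k \<longleftrightarrow> (\<forall>X Y Z. smooth_field U X \<and> smooth_field U Y \<and> smooth_field U Z \<and>
      (\<forall>x\<in>U. gc G x (X x) (k x) = 0 \<and> gc G x (Y x) (k x) = 0 \<and> (\<exists>c. Z x = c *s k x))
      \<longrightarrow> (\<forall>x\<in>U. gc G x (covD G X Y x) (Z x) = 0))"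

end

(*
  Let Phi_ab be the trace-free Ricci tensor and (k, l, n) a null frame at each point, so that
  g^ab = k^a l^b + l^a k^b - 2 n^a n^b.  Multiplicity exactly two means Phi_ab k^b = phi k_a with
  phi = Phi(k, l) nonzero, and trace-freeness gives Phi(n, n) = phi.  Differentiating the identities
  g(k, k) = 0, Phi(k, k) = 0 and k_[a Phi_b]c k^c = 0, valid on the whole chart, expresses the
  contractions of nabla Phi with k through nabla k.  Feeding this into the Cotton condition
  contracted with n and with l, and using the contracted Bianchi identity nabla^a Phi_ab = 2 nabla_b S,
  gives n_a k^b nabla_b k^a = 0 and n_a n^b nabla_b k^a = 0.  Since g(k, nabla k) = 0 and k-perp is
  spanned by k and n, the form Y_a X^b nabla_b k^a vanishes on k-perp, and co-geodesy follows from
  g(nabla_X Y, k) = - g(Y, nabla_X k).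
*)
theory Submission
  imports Defs
begin

section \<open>Partial derivatives\<close>

lemma has_vector_derivative_along_line:
  assumes "(f has_derivative D) (at (x + t *\<^sub>R v))"
  shows "((\<lambda>s. f (x + s *\<^sub>R v)) has_vector_derivative D v) (at t)"
proof -
  have "((\<lambda>s. x + s *\<^sub>R v) has_derivative (\<lambda>s. s *\<^sub>R v)) (at t)"
    by (auto intro!: derivative_eq_intros)
  from has_derivative_compose[OF this assms]
  have "((\<lambda>s. f (x + s *\<^sub>R v)) has_derivative (\<lambda>s. D (s *\<^sub>R v))) (at t)" by simp
  moreover have "linear D" using assms has_derivative_linear by blast
  ultimately show ?thesis unfolding has_vector_derivative_def by (simp add: linear_scale)
qed

lemma pd_has_derivative:
  assumes "(f has_derivative D) (at x)"
  shows "pd i f x = D (axis i 1)"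
  unfolding pd_def using has_vector_derivative_along_line[of f D x 0 "axis i 1"] assms
  by (simp add: vector_derivative_at)

lemma pd_frechet_derivative:
  assumes "f differentiable (at x)"
  shows "pd i f x = frechet_derivative f (at x) (axis i 1)"
  using assms pd_has_derivative frechet_derivative_works by blast

lemma pd_const: "pd i (\<lambda>y. c) x = 0"
  using pd_has_derivative[OF has_derivative_const[of c "at x"]] by simp

lemma pd_add:
  assumes "f differentiable (at x)" "g differentiable (at x)"
  shows "pd i (\<lambda>y. f y + g y) x = pd i f x + pd i g x"
  using pd_has_derivative[OF has_derivative_add[OF assms[unfolded frechet_derivative_works]]]
  by (simp add: assms pd_frechet_derivative)

lemma pd_diff:
  assumes "f differentiable (at x)" "g differentiable (at x)"
  shows "pd i (\<lambda>y. f y - g y) x = pd i f x - pd i g x"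
  using pd_has_derivative[OF has_derivative_diff[OF assms[unfolded frechet_derivative_works]]]
  by (simp add: assms pd_frechet_derivative)

lemma pd_minus:
  assumes "f differentiable (at x)"
  shows "pd i (\<lambda>y. - f y) x = - pd i f x"
  using pd_has_derivative[OF has_derivative_minus[OF assms[unfolded frechet_derivative_works]]]
  by (simp add: assms pd_frechet_derivative)

lemma pd_mult:
  fixes f g :: "real^3 \<Rightarrow> 'b::real_normed_algebra"
  assumes "f differentiable (at x)" "g differentiable (at x)"
  shows "pd i (\<lambda>y. f y * g y) x = f x * pd i g x + pd i f x * g x"
  using pd_has_derivative[OF has_derivative_mult[OF assms[unfolded frechet_derivative_works]]]
  by (simp add: assms pd_frechet_derivative)

lemma pd_divide_const:
  fixes f :: "real^3 \<Rightarrow> 'b::real_normed_field"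
  assumes "f differentiable (at x)"
  shows "pd i (\<lambda>y. f y / c) x = pd i f x / c"
  using pd_mult[OF assms differentiable_const, of i "inverse c"]
  by (simp add: pd_const divide_inverse)

lemma pd_sum:
  assumes "finite A" "\<And>a. a \<in> A \<Longrightarrow> f a differentiable (at x)"
  shows "pd i (\<lambda>y. \<Sum>a\<in>A. f a y) x = (\<Sum>a\<in>A. pd i (f a) x)"
proof -
  have "(f a has_derivative frechet_derivative (f a) (at x)) (at x)" if "a \<in> A" for a
    using assms(2)[OF that] frechet_derivative_works by blast
  then have "((\<lambda>y. \<Sum>a\<in>A. f a y) has_derivative (\<lambda>h. \<Sum>a\<in>A. frechet_derivative (f a) (at x) h)) (at x)"
    by (rule has_derivative_sum)
  from pd_has_derivative[OF this] show ?thesis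
    using assms(2) by (simp add: pd_frechet_derivative)
qed

lemma pd_of_real:
  assumes "f differentiable (at x)"
  shows "pd i (\<lambda>y. of_real (f y) :: 'b::real_normed_algebra_1) x = of_real (pd i f x)"
  using pd_has_derivative[OF bounded_linear.has_derivative[OF bounded_linear_of_real
        assms[unfolded frechet_derivative_works]]]
  by (simp add: assms pd_frechet_derivative)

lemma differentiable_of_real [simp]:
  "f differentiable (at x) \<Longrightarrow> (\<lambda>y. of_real (f y) :: 'b::real_normed_algebra_1) differentiable (at x)"
  unfolding differentiable_def using bounded_linear.has_derivative[OF bounded_linear_of_real] by blast

lemmas pd_rules = pd_add pd_diff pd_minus pd_mult pd_sum pd_const

lemma pd_cong:
  assumes "open U" "x \<in> U" "\<And>y. y \<in> U \<Longrightarrow> f y = g y"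
  shows "pd i f x = pd i g x"
proof -
  let ?S = "{t::real. x + t *\<^sub>R axis i 1 \<in> U}"
  have oS: "open ?S"
  proof -
    have "continuous_on UNIV (\<lambda>t::real. x + t *\<^sub>R axis i 1)" by (intro continuous_intros)
    from open_vimage[OF assms(1) this] show ?thesis by (simp add: vimage_def)
  qed
  have S0: "0 \<in> ?S" using assms(2) by simp
  have "(\<lambda>D. ((\<lambda>t. f (x + t *\<^sub>R axis i 1)) has_vector_derivative D) (at 0)) =
        (\<lambda>D. ((\<lambda>t. g (x + t *\<^sub>R axis i 1)) has_vector_derivative D) (at 0))"
  proof (rule ext, rule iffI)
    fix D assume "((\<lambda>t. f (x + t *\<^sub>R axis i 1)) has_vector_derivative D) (at 0)"
    then show "((\<lambda>t. g (x + t *\<^sub>R axis i 1)) has_vector_derivative D) (at 0)"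
      by (rule has_vector_derivative_transform_within_open[OF _ oS S0]) (use assms(3) in auto)
  next
    fix D assume "((\<lambda>t. g (x + t *\<^sub>R axis i 1)) has_vector_derivative D) (at 0)"
    then show "((\<lambda>t. f (x + t *\<^sub>R axis i 1)) has_vector_derivative D) (at 0)"
      by (rule has_vector_derivative_transform_within_open[OF _ oS S0]) (use assms(3) in auto)
  qed
  then show ?thesis unfolding pd_def vector_derivative_def by (rule arg_cong)
qed

lemma pds_cong:
  assumes "open U" "\<And>y. y \<in> U \<Longrightarrow> f y = g y" "y \<in> U"
  shows "pds is f y = pds is g y"
  using assms(3)
proof (induction "is" arbitrary: y)
  case (Cons i "is")
  then show ?case using pd_cong[OF assms(1) Cons.prems, of "pds is f" "pds is g"] by simp
qed (use assms in simp)

lemma pds_append_single: "pds (is @ [i]) f = pds is (pd i f)"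
  by (induction "is") auto

definition differentiable_upto :: "nat \<Rightarrow> (real^3) set \<Rightarrow> (real^3 \<Rightarrow> 'b::real_normed_vector) \<Rightarrow> bool" where
  "differentiable_upto n U f \<longleftrightarrow> (\<forall>is. length is \<le> n \<longrightarrow> (\<forall>x\<in>U. pds is f differentiable (at x)))"

lemma smooth_on_iff_differentiable_upto: "smooth_on U f \<longleftrightarrow> (\<forall>n. differentiable_upto n U f)"
  unfolding smooth_on_def differentiable_upto_def by auto

lemma differentiable_upto_0: "differentiable_upto 0 U f \<longleftrightarrow> (\<forall>x\<in>U. f differentiable (at x))"
  unfolding differentiable_upto_def by auto

lemma differentiable_upto_mono:
  "differentiable_upto n U f \<Longrightarrow> m \<le> n \<Longrightarrow> differentiable_upto m U f"
  unfolding differentiable_upto_def by auto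

lemma differentiable_upto_Suc:
  "differentiable_upto (Suc n) U f \<longleftrightarrow>
     differentiable_upto 0 U f \<and> (\<forall>i. differentiable_upto n U (pd i f))"
proof
  assume A: "differentiable_upto (Suc n) U f"
  then have "differentiable_upto n U (pd i f)" for i
    unfolding differentiable_upto_def
    by (metis length_append_singleton not_less_eq_eq pds_append_single)
  with A show "differentiable_upto 0 U f \<and> (\<forall>i. differentiable_upto n U (pd i f))"
    using differentiable_upto_mono by blast
next
  assume B: "differentiable_upto 0 U f \<and> (\<forall>i. differentiable_upto n U (pd i f))"
  show "differentiable_upto (Suc n) U f" unfolding differentiable_upto_def
  proof (intro allI impI)
    fix "is" :: "3 list" assume L: "length is \<le> Suc n"
    show "\<forall>x\<in>U. pds is f differentiable at x"
    proof (cases "is" rule: rev_cases)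
      case Nil then show ?thesis using B by (simp add: differentiable_upto_0)
    next
      case (snoc js i)
      then show ?thesis using B L unfolding differentiable_upto_def by (simp add: pds_append_single)
    qed
  qed
qed

lemma differentiable_upto_cong:
  assumes "open U" "\<And>y. y \<in> U \<Longrightarrow> f y = g y" "differentiable_upto n U f"
  shows "differentiable_upto n U g"
  unfolding differentiable_upto_def
proof (intro allI impI ballI)
  fix "is" x assume "length (is::3 list) \<le> n" "x \<in> U"
  then have "pds is f differentiable at x" using assms(3) unfolding differentiable_upto_def by blast
  moreover have "pds is f y = pds is g y" if "y \<in> U" for y
    using pds_cong[OF assms(1,2) that] .
  ultimately show "pds is g differentiable at x"
    using assms(1) \<open>x \<in> U\<close> has_derivative_transform_within_open unfolding differentiable_def by blast
qed

lemma differentiable_upto_const: "differentiable_upto n U (\<lambda>y. c)"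
proof (induction n arbitrary: c)
  case (Suc n)
  have "pd i (\<lambda>y. c) = (\<lambda>y. 0)" for i by (rule ext) (rule pd_const)
  then show ?case using Suc.IH by (simp add: differentiable_upto_Suc differentiable_upto_0)
qed (simp add: differentiable_upto_0)

lemma differentiable_upto_add:
  assumes "open U"
  shows "differentiable_upto n U f \<Longrightarrow> differentiable_upto n U g \<Longrightarrow>
    differentiable_upto n U (\<lambda>y. f y + g y)"
proof (induction n arbitrary: f g)
  case (Suc n)
  have d: "\<forall>x\<in>U. f differentiable at x" "\<forall>x\<in>U. g differentiable at x"
    using Suc.prems by (auto simp: differentiable_upto_Suc differentiable_upto_0)
  have "differentiable_upto n U (\<lambda>y. pd i f y + pd i g y)" for i
    using Suc by (simp add: differentiable_upto_Suc)
  then have "differentiable_upto n U (pd i (\<lambda>y. f y + g y))" for i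
    by (rule differentiable_upto_cong[OF assms, rotated]) (simp add: pd_add d)
  then show ?case using d by (simp add: differentiable_upto_Suc differentiable_upto_0)
qed (simp add: differentiable_upto_0)

lemma differentiable_upto_minus:
  assumes "open U"
  shows "differentiable_upto n U f \<Longrightarrow> differentiable_upto n U (\<lambda>y. - f y)"
proof (induction n arbitrary: f)
  case (Suc n)
  have d: "\<forall>x\<in>U. f differentiable at x"
    using Suc.prems by (auto simp: differentiable_upto_Suc differentiable_upto_0)
  have "differentiable_upto n U (\<lambda>y. - pd i f y)" for i
    using Suc by (simp add: differentiable_upto_Suc)
  then have "differentiable_upto n U (pd i (\<lambda>y. - f y))" for i
    by (rule differentiable_upto_cong[OF assms, rotated]) (simp add: pd_minus d)
  then show ?case using d by (simp add: differentiable_upto_Suc differentiable_upto_0)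
qed (simp add: differentiable_upto_0)

lemma differentiable_upto_mult:
  fixes f g :: "real^3 \<Rightarrow> 'b::real_normed_algebra"
  assumes "open U"
  shows "differentiable_upto n U f \<Longrightarrow> differentiable_upto n U g \<Longrightarrow>
    differentiable_upto n U (\<lambda>y. f y * g y)"
proof (induction n arbitrary: f g)
  case (Suc n)
  have d: "\<forall>x\<in>U. f differentiable at x" "\<forall>x\<in>U. g differentiable at x"
    using Suc.prems by (auto simp: differentiable_upto_Suc differentiable_upto_0)
  have "differentiable_upto n U f" "differentiable_upto n U g"
    using Suc.prems differentiable_upto_mono le_SucI by blast+
  then have "differentiable_upto n U (\<lambda>y. f y * pd i g y + pd i f y * g y)" for i
    using Suc by (intro differentiable_upto_add[OF assms]) (auto simp: differentiable_upto_Suc)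
  then have "differentiable_upto n U (pd i (\<lambda>y. f y * g y))" for i
    by (rule differentiable_upto_cong[OF assms, rotated]) (simp add: pd_mult d)
  then show ?case using d by (simp add: differentiable_upto_Suc differentiable_upto_0)
qed (simp add: differentiable_upto_0)

lemma differentiable_upto_inverse:
  fixes f :: "real^3 \<Rightarrow> 'b::real_normed_field"
  assumes "open U"
  shows "differentiable_upto n U f \<Longrightarrow> \<forall>y\<in>U. f y \<noteq> 0 \<Longrightarrow>
    differentiable_upto n U (\<lambda>y. inverse (f y))"
proof (induction n arbitrary: f)
  case (Suc n)
  have d: "\<forall>x\<in>U. f differentiable at x"
    using Suc.prems by (auto simp: differentiable_upto_Suc differentiable_upto_0)
  have pd_inverse: "pd i (\<lambda>y. inverse (f y)) y = - (pd i f y * (inverse (f y) * inverse (f y)))"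
    if "y \<in> U" for i y
    using pd_has_derivative[OF Deriv.has_derivative_inverse[OF _ d[rule_format, OF that,
          unfolded frechet_derivative_works]]] Suc.prems(2) that d
    by (simp add: pd_frechet_derivative field_simps)
  have "differentiable_upto n U (\<lambda>y. inverse (f y))"
    using Suc differentiable_upto_mono le_SucI by blast
  then have H: "differentiable_upto n U (\<lambda>y. - (pd i f y * (inverse (f y) * inverse (f y))))" for i
    using Suc.prems
    by (intro differentiable_upto_minus[OF assms] differentiable_upto_mult[OF assms])
       (auto simp: differentiable_upto_Suc)
  have "differentiable_upto n U (pd i (\<lambda>y. inverse (f y)))" for i
    using H[of i] by (rule differentiable_upto_cong[OF assms, rotated]) (simp add: pd_inverse)
  moreover have "\<forall>x\<in>U. (\<lambda>y. inverse (f y)) differentiable at x"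
    using d Suc.prems(2) by auto
  ultimately show ?case by (simp add: differentiable_upto_Suc differentiable_upto_0)
qed (simp add: differentiable_upto_0)

lemma differentiable_upto_sum:
  assumes "open U" "finite A" "\<And>a. a \<in> A \<Longrightarrow> differentiable_upto n U (f a)"
  shows "differentiable_upto n U (\<lambda>y. \<Sum>a\<in>A. f a y)"
  using assms(2,3)
  by (induction A rule: finite_induct) (simp_all add: differentiable_upto_const differentiable_upto_add[OF assms(1)])

lemma smooth_on_const: "smooth_on U (\<lambda>y. c)"
  by (simp add: smooth_on_iff_differentiable_upto differentiable_upto_const)

lemma smooth_on_add:
  "open U \<Longrightarrow> smooth_on U f \<Longrightarrow> smooth_on U g \<Longrightarrow> smooth_on U (\<lambda>y. f y + g y)"
  by (simp add: smooth_on_iff_differentiable_upto differentiable_upto_add)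

lemma smooth_on_minus: "open U \<Longrightarrow> smooth_on U f \<Longrightarrow> smooth_on U (\<lambda>y. - f y)"
  by (simp add: smooth_on_iff_differentiable_upto differentiable_upto_minus)

lemma smooth_on_diff:
  "open U \<Longrightarrow> smooth_on U f \<Longrightarrow> smooth_on U g \<Longrightarrow> smooth_on U (\<lambda>y. f y - g y)"
  using smooth_on_add[of U f "\<lambda>y. - g y"] smooth_on_minus[of U g] by simp

lemma smooth_on_mult:
  "open U \<Longrightarrow> smooth_on U f \<Longrightarrow> smooth_on U g \<Longrightarrow>
    smooth_on U (\<lambda>y. f y * g y :: 'b::real_normed_algebra)"
  by (simp add: smooth_on_iff_differentiable_upto differentiable_upto_mult)

lemma smooth_on_inverse:
  "open U \<Longrightarrow> smooth_on U f \<Longrightarrow> \<forall>y\<in>U. f y \<noteq> 0 \<Longrightarrow>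
    smooth_on U (\<lambda>y. inverse (f y) :: 'b::real_normed_field)"
  by (simp add: smooth_on_iff_differentiable_upto differentiable_upto_inverse)

lemma smooth_on_sum:
  "open U \<Longrightarrow> finite A \<Longrightarrow> (\<And>a. a \<in> A \<Longrightarrow> smooth_on U (f a)) \<Longrightarrow>
    smooth_on U (\<lambda>y. \<Sum>a\<in>A. f a y)"
  by (simp add: smooth_on_iff_differentiable_upto differentiable_upto_sum)

lemma smooth_on_pd: "smooth_on U f \<Longrightarrow> smooth_on U (pd i f)"
  unfolding smooth_on_iff_differentiable_upto by (metis differentiable_upto_Suc)

lemma smooth_on_differentiable: "smooth_on U f \<Longrightarrow> x \<in> U \<Longrightarrow> f differentiable (at x)"
  unfolding smooth_on_def by (metis pds.simps(1))

lemma smooth_on_cong: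
  "open U \<Longrightarrow> (\<And>y. y \<in> U \<Longrightarrow> f y = g y) \<Longrightarrow> smooth_on U f \<Longrightarrow> smooth_on U g"
  unfolding smooth_on_iff_differentiable_upto using differentiable_upto_cong by blast

lemmas smooth_on_intros = finite_class.finite_UNIV smooth_on_add smooth_on_diff smooth_on_mult smooth_on_minus
  smooth_on_const smooth_on_sum smooth_on_pd

section \<open>Symmetry of second partial derivatives\<close>

lemma second_difference_mvt:
  fixes f :: "real^3 \<Rightarrow> real"
  assumes h: "0 < h" and df: "\<And>y. norm (y - x) \<le> 2 * h \<Longrightarrow> f differentiable (at y)"
  obtains z where "0 < z" "z < h"
    "f (x + h *\<^sub>R axis j 1 + h *\<^sub>R axis i 1) - f (x + h *\<^sub>R axis i 1) - f (x + h *\<^sub>R axis j 1) + f x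
       = h * (pd i f (x + h *\<^sub>R axis j 1 + z *\<^sub>R axis i 1) - pd i f (x + z *\<^sub>R axis i 1))"
proof -
  define y where "y = x + h *\<^sub>R axis j 1"
  define \<phi> where "\<phi> t = f (y + t *\<^sub>R axis i 1) - f (x + t *\<^sub>R axis i 1)" for t
  have line: "((\<lambda>s. f (p + s *\<^sub>R axis i 1)) has_real_derivative pd i f (p + t *\<^sub>R axis i 1)) (at t)"
    if "norm (p + t *\<^sub>R axis i 1 - x) \<le> 2 * h" for p t
  proof -
    have D: "(f has_derivative frechet_derivative f (at (p + t *\<^sub>R axis i 1))) (at (p + t *\<^sub>R axis i 1))"
      using df[OF that] frechet_derivative_works by blast
    show ?thesis
      using has_vector_derivative_along_line[OF D] pd_frechet_derivative[OF df[OF that], of i]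
      by (simp add: has_real_derivative_iff_has_vector_derivative)
  qed
  have "norm (y + t *\<^sub>R axis i 1 - x) \<le> 2 * h" "norm (x + t *\<^sub>R axis i 1 - x) \<le> 2 * h"
    if "0 \<le> t" "t \<le> h" for t
  proof -
    have "y + t *\<^sub>R axis i 1 - x = h *\<^sub>R axis j 1 + t *\<^sub>R axis i 1"
      by (simp add: y_def algebra_simps)
    then have "norm (y + t *\<^sub>R axis i 1 - x) = norm (h *\<^sub>R axis j 1 + t *\<^sub>R (axis i 1 :: real^3))"
      by (simp only:)
    also have "\<dots> \<le> norm (h *\<^sub>R (axis j 1 :: real^3)) + norm (t *\<^sub>R (axis i 1 :: real^3))"
      by (rule norm_triangle_ineq)
    also have "\<dots> = h + t" using that h by (simp add: norm_axis_1)
    finally show "norm (y + t *\<^sub>R axis i 1 - x) \<le> 2 * h" using that by simp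
    show "norm (x + t *\<^sub>R axis i 1 - x) \<le> 2 * h" using that h by (simp add: norm_axis_1)
  qed
  then have "(\<phi> has_real_derivative (pd i f (y + t *\<^sub>R axis i 1) - pd i f (x + t *\<^sub>R axis i 1))) (at t)"
    if "0 \<le> t" "t \<le> h" for t
    unfolding \<phi>_def[abs_def] using that by (intro DERIV_diff line) auto
  then obtain z where "0 < z" "z < h"
    "\<phi> h - \<phi> 0 = (h - 0) * (pd i f (y + z *\<^sub>R axis i 1) - pd i f (x + z *\<^sub>R axis i 1))"
    using MVT2[OF h, of \<phi> "\<lambda>t. pd i f (y + t *\<^sub>R axis i 1) - pd i f (x + t *\<^sub>R axis i 1)"] by auto
  then show ?thesis using that unfolding \<phi>_def y_def by (simp add: algebra_simps)
qed

lemma pd_increment_approx: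
  fixes \<psi> :: "real^3 \<Rightarrow> real"
  assumes "\<psi> differentiable (at x)" and "e > 0"
  obtains \<delta> where "\<delta> > 0"
    "\<And>p q h. norm (p - x) < \<delta> \<Longrightarrow> norm (q - x) < \<delta> \<Longrightarrow> p - q = h *\<^sub>R axis j 1 \<Longrightarrow>
       \<bar>\<psi> p - \<psi> q - h * pd j \<psi> x\<bar> \<le> e * (norm (p - x) + norm (q - x))"
proof -
  define D where "D = frechet_derivative \<psi> (at x)"
  have Dd: "(\<psi> has_derivative D) (at x)"
    using assms(1) frechet_derivative_works unfolding D_def by blast
  have lin: "linear D" using Dd has_derivative_linear by blast
  obtain \<delta> where \<delta>: "\<delta> > 0"
    "\<And>y. norm (y - x) < \<delta> \<Longrightarrow> norm (\<psi> y - \<psi> x - D (y - x)) \<le> e * norm (y - x)"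
    using Dd assms(2) unfolding has_derivative_at_alt by meson
  show thesis
  proof (rule that[OF \<delta>(1)])
    fix p q h
    assume p: "norm (p - x) < \<delta>" and q: "norm (q - x) < \<delta>" and pq: "p - q = h *\<^sub>R axis j 1"
    have "D (p - x) - D (q - x) = D (h *\<^sub>R axis j 1)"
      using lin pq by (simp add: linear_diff[symmetric])
    also have "\<dots> = h * pd j \<psi> x"
      using lin pd_frechet_derivative[OF assms(1), of j] by (simp add: D_def linear_scale)
    finally have "\<psi> p - \<psi> q - h * pd j \<psi> x = (\<psi> p - \<psi> x - D (p - x)) - (\<psi> q - \<psi> x - D (q - x))"
      by simp
    then have "\<bar>\<psi> p - \<psi> q - h * pd j \<psi> x\<bar> \<le> norm (\<psi> p - \<psi> x - D (p - x)) + norm (\<psi> q - \<psi> x - D (q - x))"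
      by (simp only: real_norm_def abs_triangle_ineq4)
    also have "\<dots> \<le> e * norm (p - x) + e * norm (q - x)"
      using \<delta>(2)[OF p] \<delta>(2)[OF q] by (rule add_mono)
    finally show "\<bar>\<psi> p - \<psi> q - h * pd j \<psi> x\<bar> \<le> e * (norm (p - x) + norm (q - x))"
      by (simp add: distrib_left)
  qed
qed

lemma second_difference_approx:
  fixes f :: "real^3 \<Rightarrow> real"
  assumes U: "open U" "x \<in> U" and df: "\<And>y. y \<in> U \<Longrightarrow> f differentiable (at y)"
    and dpsi: "pd i f differentiable (at x)" and e: "e > 0"
  shows "\<exists>d>0. \<forall>h. 0 < h \<and> h < d \<longrightarrow>
     \<bar>(f (x + h *\<^sub>R axis j 1 + h *\<^sub>R axis i 1) - f (x + h *\<^sub>R axis i 1) - f (x + h *\<^sub>R axis j 1) + f x)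
        - h^2 * pd j (pd i f) x\<bar> \<le> e * h^2"
proof -
  obtain \<delta> where \<delta>: "\<delta> > 0"
    "\<And>p q h. norm (p - x) < \<delta> \<Longrightarrow> norm (q - x) < \<delta> \<Longrightarrow> p - q = h *\<^sub>R axis j 1 \<Longrightarrow>
       \<bar>pd i f p - pd i f q - h * pd j (pd i f) x\<bar> \<le> (e/4) * (norm (p - x) + norm (q - x))"
    using pd_increment_approx[OF dpsi, of "e/4"] e by auto
  obtain r where r: "r > 0" "ball x r \<subseteq> U" using U open_contains_ball by blast
  define d where "d = min \<delta> r / 3"
  have "\<bar>(f (x + h *\<^sub>R axis j 1 + h *\<^sub>R axis i 1) - f (x + h *\<^sub>R axis i 1) - f (x + h *\<^sub>R axis j 1) + f x)
        - h^2 * pd j (pd i f) x\<bar> \<le> e * h^2" if h: "0 < h" "h < d" for h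
  proof -
    have hd: "3 * h < \<delta>" "3 * h < r" using h(2) unfolding d_def by auto
    have "f differentiable (at y)" if "norm (y - x) \<le> 2 * h" for y
    proof -
      have "y \<in> ball x r" using that hd h by (simp add: dist_norm norm_minus_commute)
      then show ?thesis using r(2) df by blast
    qed
    then obtain z where z: "0 < z" "z < h"
      "f (x + h *\<^sub>R axis j 1 + h *\<^sub>R axis i 1) - f (x + h *\<^sub>R axis i 1) - f (x + h *\<^sub>R axis j 1) + f x
         = h * (pd i f (x + h *\<^sub>R axis j 1 + z *\<^sub>R axis i 1) - pd i f (x + z *\<^sub>R axis i 1))"
      using second_difference_mvt[OF h(1)] by blast
    define p1 where "p1 = x + h *\<^sub>R axis j 1 + z *\<^sub>R axis i 1"
    define p2 where "p2 = x + z *\<^sub>R axis i 1"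
    have "norm (p1 - x) \<le> norm (h *\<^sub>R (axis j 1 :: real^3)) + norm (z *\<^sub>R (axis i 1 :: real^3))"
      unfolding p1_def by (metis add_diff_cancel_left' norm_triangle_ineq add.assoc)
    then have n1: "norm (p1 - x) \<le> 2 * h" using z h by (simp add: norm_axis_1)
    have n2: "norm (p2 - x) \<le> 2 * h" using z by (simp add: p2_def norm_axis_1)
    have "p1 - p2 = h *\<^sub>R axis j 1" by (simp add: p1_def p2_def)
    then have "\<bar>pd i f p1 - pd i f p2 - h * pd j (pd i f) x\<bar> \<le> (e/4) * (norm (p1 - x) + norm (p2 - x))"
      using n1 n2 hd h by (intro \<delta>(2)) auto
    also have "\<dots> \<le> (e/4) * (4 * h)" using n1 n2 e by (intro mult_left_mono) auto
    finally have "\<bar>pd i f p1 - pd i f p2 - h * pd j (pd i f) x\<bar> \<le> e * h" by simp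
    moreover have "(f (x + h *\<^sub>R axis j 1 + h *\<^sub>R axis i 1) - f (x + h *\<^sub>R axis i 1) - f (x + h *\<^sub>R axis j 1) + f x)
        - h^2 * pd j (pd i f) x = h * (pd i f p1 - pd i f p2 - h * pd j (pd i f) x)"
      using z(3) unfolding p1_def p2_def by (simp add: power2_eq_square algebra_simps)
    ultimately show ?thesis using h
      by (simp add: abs_mult power2_eq_square mult_left_mono mult.assoc[symmetric])
  qed
  moreover have "d > 0" using \<delta> r by (simp add: d_def)
  ultimately show ?thesis by blast
qed

lemma pd_commute:
  fixes f :: "real^3 \<Rightarrow> real"
  assumes U: "open U" "x \<in> U" and df: "\<And>y. y \<in> U \<Longrightarrow> f differentiable (at y)"
    and di: "pd i f differentiable (at x)" and dj: "pd j f differentiable (at x)"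
  shows "pd i (pd j f) x = pd j (pd i f) x"
proof -
  let ?A = "pd j (pd i f) x" and ?B = "pd i (pd j f) x"
  have "\<bar>?A - ?B\<bar> \<le> 0 + e" if e: "e > 0" for e
  proof -
    obtain d1 where d1: "d1 > 0" "\<forall>h. 0 < h \<and> h < d1 \<longrightarrow>
       \<bar>(f (x + h *\<^sub>R axis j 1 + h *\<^sub>R axis i 1) - f (x + h *\<^sub>R axis i 1) - f (x + h *\<^sub>R axis j 1) + f x)
          - h^2 * ?A\<bar> \<le> (e/2) * h^2"
      using second_difference_approx[OF U df di, of "e/2" j] e by auto
    obtain d2 where d2: "d2 > 0" "\<forall>h. 0 < h \<and> h < d2 \<longrightarrow>
       \<bar>(f (x + h *\<^sub>R axis i 1 + h *\<^sub>R axis j 1) - f (x + h *\<^sub>R axis j 1) - f (x + h *\<^sub>R axis i 1) + f x)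
          - h^2 * ?B\<bar> \<le> (e/2) * h^2"
      using second_difference_approx[OF U df dj, of "e/2" i] e by auto
    define h where "h = min d1 d2 / 2"
    have h: "0 < h" "h < d1" "h < d2" using d1 d2 by (auto simp: h_def)
    define \<Delta> where "\<Delta> = f (x + h *\<^sub>R axis j 1 + h *\<^sub>R axis i 1) - f (x + h *\<^sub>R axis i 1)
      - f (x + h *\<^sub>R axis j 1) + f x"
    have "x + h *\<^sub>R axis i 1 + h *\<^sub>R axis j 1 = x + h *\<^sub>R axis j 1 + h *\<^sub>R axis i 1"
      by (simp add: algebra_simps)
    then have "\<bar>\<Delta> - h^2 * ?A\<bar> \<le> (e/2) * h^2" "\<bar>\<Delta> - h^2 * ?B\<bar> \<le> (e/2) * h^2"
      using d1(2) d2(2) h unfolding \<Delta>_def by (auto simp: algebra_simps)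
    moreover have "h^2 * \<bar>?A - ?B\<bar> = \<bar>(\<Delta> - h^2 * ?B) - (\<Delta> - h^2 * ?A)\<bar>"
      by (simp add: abs_mult abs_minus_commute flip: right_diff_distrib)
    moreover have "(e/2) * h^2 + (e/2) * h^2 = h^2 * e" by (simp add: algebra_simps)
    ultimately have "h^2 * \<bar>?A - ?B\<bar> \<le> h^2 * e"
      using abs_triangle_ineq4[of "\<Delta> - h^2 * ?B" "\<Delta> - h^2 * ?A"] by linarith
    then show ?thesis using mult_le_cancel_left_pos[of "h^2"] h by simp
  qed
  then show ?thesis using field_le_epsilon[of "\<bar>?A - ?B\<bar>" 0] by simp
qed

section \<open>Index calculus\<close>

lemma sum_mult_delta:
  fixes X :: "'n::finite \<Rightarrow> 'a::comm_semiring_1"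
  shows "(\<Sum>d\<in>UNIV. X d * (if d = b then 1 else 0)) = X b"
    and "(\<Sum>d\<in>UNIV. X d * (if b = d then 1 else 0)) = X b"
    and "(\<Sum>d\<in>UNIV. (if b = d then 1 else 0) * X d) = X b"
proof -
  have "(\<Sum>d\<in>UNIV. X d * (if d = b then 1 else 0)) = (\<Sum>d\<in>UNIV. if d = b then X d else 0)"
    by (rule sum.cong) auto
  then show "(\<Sum>d\<in>UNIV. X d * (if d = b then 1 else 0)) = X b" by simp
  then show "(\<Sum>d\<in>UNIV. X d * (if b = d then 1 else 0)) = X b"
    and "(\<Sum>d\<in>UNIV. (if b = d then 1 else 0) * X d) = X b"
    by (simp_all add: eq_commute mult.commute)
qed

lemma sum_contract_inverse:
  fixes A B :: "'n::finite \<Rightarrow> 'n \<Rightarrow> 'a::comm_semiring_1"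
  assumes inv: "\<And>a c. (\<Sum>b\<in>UNIV. A a b * B b c) = (if a = c then 1 else 0)"
  shows "(\<Sum>h\<in>UNIV. (\<Sum>k\<in>UNIV. T k * A k h) * B h c) = T c"
proof -
  have "(\<Sum>h\<in>UNIV. (\<Sum>k\<in>UNIV. T k * A k h) * B h c) = (\<Sum>h\<in>UNIV. \<Sum>k\<in>UNIV. T k * (A k h * B h c))"
    unfolding sum_distrib_right by (simp add: mult_ac)
  also have "\<dots> = (\<Sum>k\<in>UNIV. \<Sum>h\<in>UNIV. T k * (A k h * B h c))" by (rule sum.swap)
  also have "\<dots> = (\<Sum>k\<in>UNIV. T k * (\<Sum>h\<in>UNIV. A k h * B h c))" by (simp add: sum_distrib_left)
  also have "\<dots> = T c" by (simp add: inv sum_mult_delta)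
  finally show ?thesis .
qed

definition next3 :: "3 \<Rightarrow> 3" where
  "next3 i = (if i = 1 then 2 else if i = 2 then 3 else 1)"

definition adjugate3 :: "real^3^3 \<Rightarrow> 3 \<Rightarrow> 3 \<Rightarrow> real" where
  "adjugate3 A i j = A$(next3 j)$(next3 i) * A$(next3 (next3 j))$(next3 (next3 i))
     - A$(next3 j)$(next3 (next3 i)) * A$(next3 (next3 j))$(next3 i)"

lemma next3_simps [simp]: "next3 1 = 2" "next3 2 = 3" "next3 3 = 1"
  by (auto simp: next3_def)

lemma adjugate3_right: "(\<Sum>k\<in>UNIV. A$i$k * adjugate3 A k j) = (if i = j then det A else 0)"
  using exhaust_3[of i] exhaust_3[of j] by (auto simp: adjugate3_def sum_3 det_3 algebra_simps)

lemma adjugate3_left: "(\<Sum>k\<in>UNIV. adjugate3 A i k * A$k$j) = (if i = j then det A else 0)"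
  using exhaust_3[of i] exhaust_3[of j] by (auto simp: adjugate3_def sum_3 det_3 algebra_simps)

lemma matrix_inv_3:
  assumes "det A \<noteq> 0"
  shows "matrix_inv A $ i $ j = adjugate3 A i j / det A"
proof -
  define B where "B = (\<chi> i j. adjugate3 A i j / det A)"
  have AB: "A ** B = mat 1" and BA: "B ** A = mat 1"
    unfolding B_def matrix_matrix_mult_def mat_def
    by (simp_all add: vec_eq_iff sum_divide_distrib[symmetric] adjugate3_right adjugate3_left assms)
  have "A' = B" if "A ** A' = mat 1 \<and> A' ** A = mat 1" for A'
    by (metis AB that matrix_mul_assoc matrix_mul_lid matrix_mul_rid)
  moreover have "A ** matrix_inv A = mat 1 \<and> matrix_inv A ** A = mat 1"
    unfolding matrix_inv_def by (rule someI[of _ B]) (simp add: AB BA)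
  ultimately have "matrix_inv A = B" by blast
  then show ?thesis by (simp add: B_def)
qed

section \<open>Curvature as an expression in the Christoffel symbols\<close>

text \<open>Pointwise, the curvature and its derivatives are polynomials in the Christoffel symbols
  \<open>\<Gamma> c a b = \<Gamma>\<^sup>c\<^sub>a\<^sub>b\<close> and their partial derivatives \<open>d\<Gamma> e c a b = \<partial>\<^sub>e \<Gamma>\<^sup>c\<^sub>a\<^sub>b\<close>,
  \<open>dd\<Gamma> f e c a b = \<partial>\<^sub>f \<partial>\<^sub>e \<Gamma>\<^sup>c\<^sub>a\<^sub>b\<close>.  The identities among them are proved for arbitrary
  arrays, which keeps the simplifier away from \<^const>\<open>pd\<close> and \<^const>\<open>christ\<close>.\<close>

definition riem_expr :: "(3\<Rightarrow>3\<Rightarrow>3\<Rightarrow>real) \<Rightarrow> (3\<Rightarrow>3\<Rightarrow>3\<Rightarrow>3\<Rightarrow>real) \<Rightarrow> 3\<Rightarrow>3\<Rightarrow>3\<Rightarrow>3\<Rightarrow>real" where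
  "riem_expr \<Gamma> d\<Gamma> a b d c = d\<Gamma> a c b d - d\<Gamma> b c a d + (\<Sum>e\<in>UNIV. \<Gamma> c a e * \<Gamma> e b d - \<Gamma> c b e * \<Gamma> e a d)"

definition riem_deriv_expr ::
    "(3\<Rightarrow>3\<Rightarrow>3\<Rightarrow>real) \<Rightarrow> (3\<Rightarrow>3\<Rightarrow>3\<Rightarrow>3\<Rightarrow>real) \<Rightarrow> (3\<Rightarrow>3\<Rightarrow>3\<Rightarrow>3\<Rightarrow>3\<Rightarrow>real) \<Rightarrow> 3\<Rightarrow>3\<Rightarrow>3\<Rightarrow>3\<Rightarrow>3\<Rightarrow>real" where
  "riem_deriv_expr \<Gamma> d\<Gamma> dd\<Gamma> e a b d c = dd\<Gamma> e a c b d - dd\<Gamma> e b c a d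
     + (\<Sum>f\<in>UNIV. d\<Gamma> e c a f * \<Gamma> f b d + \<Gamma> c a f * d\<Gamma> e f b d - d\<Gamma> e c b f * \<Gamma> f a d - \<Gamma> c b f * d\<Gamma> e f a d)"

text \<open>\<open>cov_riem_expr \<Gamma> R dR e a b d c\<close> is \<open>\<nabla>\<^sub>e R\<^sub>a\<^sub>b\<^sub>d\<^sup>c\<close> for a tensor \<open>R\<close> with partial
  derivatives \<open>dR e a b d c = \<partial>\<^sub>e R\<^sub>a\<^sub>b\<^sub>d\<^sup>c\<close>; \<open>cov_ricci_expr\<close> is the same for a covariant 2-tensor.\<close>

definition cov_riem_expr ::
    "(3\<Rightarrow>3\<Rightarrow>3\<Rightarrow>real) \<Rightarrow> (3\<Rightarrow>3\<Rightarrow>3\<Rightarrow>3\<Rightarrow>real) \<Rightarrow> (3\<Rightarrow>3\<Rightarrow>3\<Rightarrow>3\<Rightarrow>3\<Rightarrow>real) \<Rightarrow> 3\<Rightarrow>3\<Rightarrow>3\<Rightarrow>3\<Rightarrow>3\<Rightarrow>real" where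
  "cov_riem_expr \<Gamma> R dR e a b d c = dR e a b d c
     - (\<Sum>f\<in>UNIV. \<Gamma> f e a * R f b d c + \<Gamma> f e b * R a f d c + \<Gamma> f e d * R a b f c)
     + (\<Sum>f\<in>UNIV. \<Gamma> c e f * R a b d f)"

definition cov_ricci_expr ::
    "(3\<Rightarrow>3\<Rightarrow>3\<Rightarrow>real) \<Rightarrow> (3\<Rightarrow>3\<Rightarrow>real) \<Rightarrow> (3\<Rightarrow>3\<Rightarrow>3\<Rightarrow>real) \<Rightarrow> 3\<Rightarrow>3\<Rightarrow>3\<Rightarrow>real" where
  "cov_ricci_expr \<Gamma> Ric dRic e a d = dRic e a d - (\<Sum>f\<in>UNIV. \<Gamma> f e a * Ric f d + \<Gamma> f e d * Ric a f)"

lemma riem_expr_antisym: "riem_expr \<Gamma> d\<Gamma> a b d c = - riem_expr \<Gamma> d\<Gamma> b a d c"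
  unfolding riem_expr_def sum_3 by (simp add: algebra_simps)

lemma riem_expr_bianchi1:
  assumes "\<And>c a b. \<Gamma> c a b = \<Gamma> c b a" and "\<And>e c a b. d\<Gamma> e c a b = d\<Gamma> e c b a"
  shows "riem_expr \<Gamma> d\<Gamma> a b d c + riem_expr \<Gamma> d\<Gamma> b d a c + riem_expr \<Gamma> d\<Gamma> d a b c = 0"
  unfolding riem_expr_def sum_3 by (simp add: algebra_simps assms)

text \<open>The lowered curvature tensor is skew in its last two indices because \<open>\<partial>\<^sub>a\<partial>\<^sub>b g\<^sub>d\<^sub>c\<close> is
  symmetric in \<open>a, b\<close>; here \<open>dg\<close> and \<open>ddg\<close> stand for the first and second partial derivatives
  of the metric, expressed through the Christoffel symbols.\<close>

lemma riem_expr_lowered_antisym: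
  fixes g :: "3\<Rightarrow>3\<Rightarrow>real" and dg \<Gamma> :: "3\<Rightarrow>3\<Rightarrow>3\<Rightarrow>real" and ddg d\<Gamma> :: "3\<Rightarrow>3\<Rightarrow>3\<Rightarrow>3\<Rightarrow>real"
  assumes gs: "\<And>a b. g a b = g b a" and Gs: "\<And>c a b. \<Gamma> c a b = \<Gamma> c b a"
    and compat: "\<And>e a b. dg e a b = (\<Sum>f\<in>UNIV. \<Gamma> f e a * g f b + \<Gamma> f e b * g a f)"
    and ddg: "\<And>f e a b. ddg f e a b = (\<Sum>h\<in>UNIV. d\<Gamma> f h e a * g h b + \<Gamma> h e a * dg f h b
                                              + d\<Gamma> f h e b * g a h + \<Gamma> h e b * dg f a h)"
    and ddg_sym: "\<And>f e a b. ddg f e a b = ddg e f a b"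
  shows "(\<Sum>h\<in>UNIV. riem_expr \<Gamma> d\<Gamma> a b d h * g h c) + (\<Sum>h\<in>UNIV. riem_expr \<Gamma> d\<Gamma> a b c h * g h d) = 0"
proof -
  have "(\<Sum>h\<in>UNIV. riem_expr \<Gamma> d\<Gamma> a b d h * g h c) + (\<Sum>h\<in>UNIV. riem_expr \<Gamma> d\<Gamma> a b c h * g h d)
      = ddg a b d c - ddg b a d c"
    unfolding ddg riem_expr_def compat sum_3 by (simp add: algebra_simps Gs gs)
  then show ?thesis using ddg_sym by simp
qed

lemma algebraic_curvature_pair_sym:
  fixes L :: "3 \<Rightarrow> 3 \<Rightarrow> 3 \<Rightarrow> 3 \<Rightarrow> real"
  assumes A1: "\<And>a b d c. L a b d c = - L b a d c"
    and A2: "\<And>a b d c. L a b d c = - L a b c d"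
    and B: "\<And>a b d c. L a b d c + L b d a c + L d a b c = 0"
  shows "L a b d c = L d c a b"
proof -
  have "L a b d c + L b d a c + L d a b c = 0" "L b d c a + L d c b a + L c b d a = 0"
    "L d c a b + L c a d b + L a d c b = 0" "L c a b d + L a b c d + L b c a d = 0"
    using B[of a b d c] B[of b d c a] B[of d c a b] B[of c a b d] by auto
  moreover have "L b d a c = - L b d c a" "L d a b c = - L a d b c" "L d c b a = - L d c a b"
    "L c b d a = - L b c d a" "L c a d b = - L c a b d" "L a d c b = - L a d b c"
    "L a b c d = - L a b d c" "L b c a d = - L b c d a"
    using A2[of b d a c] A1[of d a b c] A2[of d c b a] A1[of c b d a] A2[of c a d b] A2[of a d c b]
      A2[of a b c d] A2[of b c a d] by auto
  ultimately show ?thesis by linarith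
qed

lemma riem_expr_bianchi2:
  assumes "\<And>c a b. \<Gamma> c a b = \<Gamma> c b a" and "\<And>e c a b. d\<Gamma> e c a b = d\<Gamma> e c b a"
    and ddGs: "\<And>f e c a b. dd\<Gamma> f e c a b = dd\<Gamma> e f c a b"
  shows "cov_riem_expr \<Gamma> (riem_expr \<Gamma> d\<Gamma>) (riem_deriv_expr \<Gamma> d\<Gamma> dd\<Gamma>) e a b d c
     + cov_riem_expr \<Gamma> (riem_expr \<Gamma> d\<Gamma>) (riem_deriv_expr \<Gamma> d\<Gamma> dd\<Gamma>) a b e d c
     + cov_riem_expr \<Gamma> (riem_expr \<Gamma> d\<Gamma>) (riem_deriv_expr \<Gamma> d\<Gamma> dd\<Gamma>) b e a d c = 0"
  unfolding cov_riem_expr_def riem_deriv_expr_def riem_expr_def sum_3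
  by (simp add: algebra_simps assms(1,2)) (simp add: ddGs)

lemma cov_riem_expr_antisym:
  assumes RA: "\<And>a b d c. R a b d c + R b a d c = 0"
    and dRA: "\<And>e a b d c. dR e a b d c + dR e b a d c = 0"
  shows "cov_riem_expr \<Gamma> R dR a b e d c = - cov_riem_expr \<Gamma> R dR a e b d c"
proof -
  have "cov_riem_expr \<Gamma> R dR a b e d c + cov_riem_expr \<Gamma> R dR a e b d c = (dR a b e d c + dR a e b d c)
    - (\<Sum>f\<in>UNIV. \<Gamma> f a b * (R f e d c + R e f d c)) - (\<Sum>f\<in>UNIV. \<Gamma> f a e * (R b f d c + R f b d c))
    - (\<Sum>f\<in>UNIV. \<Gamma> f a d * (R b e f c + R e b f c)) + (\<Sum>f\<in>UNIV. \<Gamma> c a f * (R b e d f + R e b d f))"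
    unfolding cov_riem_expr_def sum_3 by (simp add: algebra_simps)
  also have "\<dots> = 0" by (simp add: RA dRA)
  finally show ?thesis by simp
qed

lemma sum_cov_riem_expr:
  "(\<Sum>b\<in>UNIV. cov_riem_expr \<Gamma> R dR e a b d b)
     = cov_ricci_expr \<Gamma> (\<lambda>a d. \<Sum>b\<in>UNIV. R a b d b) (\<lambda>e a d. \<Sum>b\<in>UNIV. dR e a b d b) e a d"
  unfolding cov_riem_expr_def cov_ricci_expr_def sum_3 by (simp add: algebra_simps)

lemma trace_cov_ricci_expr:
  fixes gi :: "3\<Rightarrow>3\<Rightarrow>real"
  assumes "\<And>c a b. \<Gamma> c a b = \<Gamma> c b a" and "\<And>a b. gi a b = gi b a"
  shows "(\<Sum>a\<in>UNIV. \<Sum>d\<in>UNIV. gi a d * cov_ricci_expr \<Gamma> Ric dRic e a d) =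
     (\<Sum>a\<in>UNIV. \<Sum>d\<in>UNIV. (- (\<Sum>f\<in>UNIV. \<Gamma> a e f * gi f d + \<Gamma> d e f * gi a f)) * Ric a d
        + gi a d * dRic e a d)"
  unfolding cov_ricci_expr_def sum_3 by (simp add: algebra_simps assms)

lemma trace_cov_riem_expr:
  fixes gi Ric :: "3\<Rightarrow>3\<Rightarrow>real" and dgi dRic \<Gamma> :: "3\<Rightarrow>3\<Rightarrow>3\<Rightarrow>real"
  assumes Gs: "\<And>c a b. \<Gamma> c a b = \<Gamma> c b a" and gis: "\<And>a b. gi a b = gi b a"
    and pd_gi: "\<And>e a b. dgi e a b = - (\<Sum>f\<in>UNIV. \<Gamma> a e f * gi f b + \<Gamma> b e f * gi a f)"
    and trace: "\<And>e c. (\<Sum>a\<in>UNIV. \<Sum>d\<in>UNIV. gi a d * R e a d c) = - (\<Sum>h\<in>UNIV. Ric h e * gi h c)"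
    and pd_trace: "\<And>b e c. (\<Sum>a\<in>UNIV. \<Sum>d\<in>UNIV. dgi b a d * R e a d c + gi a d * dR b e a d c)
        = - (\<Sum>h\<in>UNIV. dRic b h e * gi h c + Ric h e * dgi b h c)"
  shows "(\<Sum>a\<in>UNIV. \<Sum>d\<in>UNIV. gi a d * cov_riem_expr \<Gamma> R dR b e a d c)
    = - (\<Sum>h\<in>UNIV. gi h c * cov_ricci_expr \<Gamma> Ric dRic b h e)"
proof -
  have "(\<Sum>a\<in>UNIV. \<Sum>d\<in>UNIV. gi a d * cov_riem_expr \<Gamma> R dR b e a d c)
      - (- (\<Sum>h\<in>UNIV. gi h c * cov_ricci_expr \<Gamma> Ric dRic b h e))
    = ((\<Sum>a\<in>UNIV. \<Sum>d\<in>UNIV. dgi b a d * R e a d c + gi a d * dR b e a d c)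
        - (- (\<Sum>h\<in>UNIV. dRic b h e * gi h c + Ric h e * dgi b h c)))
      - (\<Sum>f\<in>UNIV. \<Gamma> f b e * ((\<Sum>a\<in>UNIV. \<Sum>d\<in>UNIV. gi a d * R f a d c) - (- (\<Sum>h\<in>UNIV. Ric h f * gi h c))))
      + (\<Sum>f\<in>UNIV. \<Gamma> c b f * ((\<Sum>a\<in>UNIV. \<Sum>d\<in>UNIV. gi a d * R e a d f) - (- (\<Sum>h\<in>UNIV. Ric h e * gi h f))))"
    unfolding cov_riem_expr_def cov_ricci_expr_def pd_gi sum_3 by (simp add: algebra_simps Gs gis)
  also have "\<dots> = 0" by (simp only: trace pd_trace) simp
  finally show ?thesis by simp
qed

lemma contracted_bianchi_once_expr:
  assumes B2: "\<And>e a b d c. NR e a b d c + NR a b e d c + NR b e a d c = 0"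
    and NR_def: "NR = cov_riem_expr \<Gamma> R dR"
    and RA: "\<And>a b d c. R a b d c + R b a d c = 0" and dRA: "\<And>e a b d c. dR e a b d c + dR e b a d c = 0"
    and Ric: "Ric = (\<lambda>a d. \<Sum>b\<in>UNIV. R a b d b)" and dRic: "dRic = (\<lambda>e a d. \<Sum>b\<in>UNIV. dR e a b d b)"
  shows "cov_ricci_expr \<Gamma> Ric dRic e a d - cov_ricci_expr \<Gamma> Ric dRic a e d
     + (\<Sum>b\<in>UNIV. NR b e a d b) = 0"
proof -
  have "(\<Sum>b\<in>UNIV. NR a b e d b) = (\<Sum>b\<in>UNIV. - NR a e b d b)"
    unfolding NR_def by (rule sum.cong[OF refl]) (rule cov_riem_expr_antisym[OF RA dRA])
  then have "(\<Sum>b\<in>UNIV. NR e a b d b + NR a b e d b + NR b e a d b)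
      = cov_ricci_expr \<Gamma> Ric dRic e a d - cov_ricci_expr \<Gamma> Ric dRic a e d + (\<Sum>b\<in>UNIV. NR b e a d b)"
    unfolding sum.distrib by (simp add: sum_negf NR_def Ric dRic sum_cov_riem_expr)
  then show ?thesis by (simp add: B2)
qed

lemma contracted_bianchi_expr:
  fixes gi Ric :: "3\<Rightarrow>3\<Rightarrow>real" and dgi dRic \<Gamma> :: "3\<Rightarrow>3\<Rightarrow>3\<Rightarrow>real"
  assumes Gs: "\<And>c a b. \<Gamma> c a b = \<Gamma> c b a" and gis: "\<And>a b. gi a b = gi b a"
    and once: "\<And>e a d. cov_ricci_expr \<Gamma> Ric dRic e a d - cov_ricci_expr \<Gamma> Ric dRic a e d
                  + (\<Sum>b\<in>UNIV. cov_riem_expr \<Gamma> R dR b e a d b) = 0"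
    and Rics: "\<And>a d. Ric a d = Ric d a" and dRics: "\<And>e a d. dRic e a d = dRic e d a"
    and pd_gi: "\<And>e a b. dgi e a b = - (\<Sum>f\<in>UNIV. \<Gamma> a e f * gi f b + \<Gamma> b e f * gi a f)"
    and trace: "\<And>e c. (\<Sum>a\<in>UNIV. \<Sum>d\<in>UNIV. gi a d * R e a d c) = - (\<Sum>h\<in>UNIV. Ric h e * gi h c)"
    and pd_trace: "\<And>b e c. (\<Sum>a\<in>UNIV. \<Sum>d\<in>UNIV. dgi b a d * R e a d c + gi a d * dR b e a d c)
        = - (\<Sum>h\<in>UNIV. dRic b h e * gi h c + Ric h e * dgi b h c)"
    and dscal: "\<And>e. dscal e = (\<Sum>a\<in>UNIV. \<Sum>d\<in>UNIV. dgi e a d * Ric a d + gi a d * dRic e a d)"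
  shows "(\<Sum>a\<in>UNIV. \<Sum>d\<in>UNIV. gi a d * cov_ricci_expr \<Gamma> Ric dRic d a e) = dscal e / 2"
proof -
  let ?N = "cov_ricci_expr \<Gamma> Ric dRic" and ?NR = "cov_riem_expr \<Gamma> R dR"
  let ?T = "\<Sum>a\<in>UNIV. \<Sum>d\<in>UNIV. gi a d * ?N d a e"
  have N_sym: "?N a e d = ?N a d e" for a e d
    unfolding cov_ricci_expr_def sum_3 by (simp add: Rics dRics[of a e d] algebra_simps)
  have first: "(\<Sum>a\<in>UNIV. \<Sum>d\<in>UNIV. gi a d * ?N e a d) = dscal e"
    unfolding dscal trace_cov_ricci_expr[OF Gs gis] pd_gi ..
  have "(\<Sum>a\<in>UNIV. \<Sum>d\<in>UNIV. gi a d * ?N a e d) = (\<Sum>a\<in>UNIV. \<Sum>d\<in>UNIV. gi a d * ?N a d e)"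
    by (intro sum.cong refl) (simp only: N_sym[of _ e])
  also have "\<dots> = (\<Sum>d\<in>UNIV. \<Sum>a\<in>UNIV. gi a d * ?N a d e)" by (rule sum.swap)
  also have "\<dots> = ?T" by (intro sum.cong refl) (metis gis)
  finally have second: "(\<Sum>a\<in>UNIV. \<Sum>d\<in>UNIV. gi a d * ?N a e d) = ?T" .
  have "(\<Sum>a\<in>UNIV. \<Sum>d\<in>UNIV. gi a d * (\<Sum>b\<in>UNIV. ?NR b e a d b))
      = (\<Sum>a\<in>UNIV. \<Sum>b\<in>UNIV. \<Sum>d\<in>UNIV. gi a d * ?NR b e a d b)"
    unfolding sum_distrib_left by (rule sum.cong[OF refl], rule sum.swap)
  also have "\<dots> = (\<Sum>b\<in>UNIV. \<Sum>a\<in>UNIV. \<Sum>d\<in>UNIV. gi a d * ?NR b e a d b)"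
    by (rule sum.swap)
  also have "\<dots> = - (\<Sum>b\<in>UNIV. \<Sum>h\<in>UNIV. gi h b * ?N b h e)"
    by (simp add: trace_cov_riem_expr[OF Gs gis pd_gi trace pd_trace] sum_negf)
  also have "\<dots> = - ?T" by (subst sum.swap) (rule refl)
  finally have third: "(\<Sum>a\<in>UNIV. \<Sum>d\<in>UNIV. gi a d * (\<Sum>b\<in>UNIV. ?NR b e a d b)) = - ?T" .
  have "0 = (\<Sum>a\<in>UNIV. \<Sum>d\<in>UNIV. gi a d * (?N e a d - ?N a e d + (\<Sum>b\<in>UNIV. ?NR b e a d b)))"
    by (simp add: once)
  also have "\<dots> = (\<Sum>a\<in>UNIV. \<Sum>d\<in>UNIV. gi a d * ?N e a d) - (\<Sum>a\<in>UNIV. \<Sum>d\<in>UNIV. gi a d * ?N a e d)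
      + (\<Sum>a\<in>UNIV. \<Sum>d\<in>UNIV. gi a d * (\<Sum>b\<in>UNIV. ?NR b e a d b))"
    by (simp add: distrib_left right_diff_distrib sum.distrib sum_subtractf)
  finally show ?thesis unfolding first second third by simp
qed

lemma metric_compat_expr:
  fixes g gi :: "3 \<Rightarrow> 3 \<Rightarrow> real" and dg \<Gamma> :: "3 \<Rightarrow> 3 \<Rightarrow> 3 \<Rightarrow> real"
  assumes gs: "\<And>a b. g a b = g b a" and gis: "\<And>a b. gi a b = gi b a"
    and inv: "\<And>a c. (\<Sum>b\<in>UNIV. gi a b * g b c) = (if a = c then 1 else 0)"
    and dgs: "\<And>e a b. dg e a b = dg e b a"
    and Gam: "\<And>c a b. \<Gamma> c a b = 1/2 * (\<Sum>d\<in>UNIV. gi c d * (dg a d b + dg b d a - dg d a b))"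
  shows "dg e a b = (\<Sum>f\<in>UNIV. \<Gamma> f e a * g f b + \<Gamma> f e b * g a f)"
proof -
  have lower: "(\<Sum>f\<in>UNIV. \<Gamma> f p q * g f r) = 1/2 * (dg p r q + dg q r p - dg r p q)" for p q r
  proof -
    have "(\<Sum>f\<in>UNIV. \<Gamma> f p q * g f r)
        = (\<Sum>f\<in>UNIV. (\<Sum>d\<in>UNIV. (1/2 * (dg p d q + dg q d p - dg d p q)) * gi d f) * g f r)"
      unfolding Gam sum_distrib_left sum_distrib_right by (simp add: gis mult_ac)
    also have "\<dots> = 1/2 * (dg p r q + dg q r p - dg r p q)" by (rule sum_contract_inverse[OF inv])
    finally show ?thesis .
  qed
  have "(\<Sum>f\<in>UNIV. \<Gamma> f e a * g f b + \<Gamma> f e b * g a f) =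
     (\<Sum>f\<in>UNIV. \<Gamma> f e a * g f b) + (\<Sum>f\<in>UNIV. \<Gamma> f e b * g f a)"
    by (simp add: sum.distrib gs)
  also have "\<dots> = dg e a b" unfolding lower using dgs by (simp add: algebra_simps)
  finally show ?thesis by simp
qed

lemma inverse_metric_deriv_expr:
  fixes g gi dg dgi :: "3\<Rightarrow>3\<Rightarrow>real" and \<Gamma> :: "3\<Rightarrow>3\<Rightarrow>3\<Rightarrow>real"
  assumes inv1: "\<And>a c. (\<Sum>b\<in>UNIV. g a b * gi b c) = (if a = c then 1 else 0)"
    and inv2: "\<And>a c. (\<Sum>b\<in>UNIV. gi a b * g b c) = (if a = c then 1 else 0)"
    and compat: "\<And>b c. dg b c = (\<Sum>f\<in>UNIV. \<Gamma> f e b * g f c + \<Gamma> f e c * g b f)"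
    and product: "\<And>a c. (\<Sum>b\<in>UNIV. gi a b * dg b c + dgi a b * g b c) = 0"
    and Gs: "\<And>c a b. \<Gamma> c a b = \<Gamma> c b a" and gis: "\<And>a b. gi a b = gi b a"
  shows "dgi a c = - (\<Sum>f\<in>UNIV. \<Gamma> a e f * gi f c + \<Gamma> c e f * gi a f)"
proof -
  define T where "T f = (\<Sum>b\<in>UNIV. gi a b * \<Gamma> f e b)" for f
  have s1: "(\<Sum>b\<in>UNIV. dgi a b * g b k) = - (\<Sum>b\<in>UNIV. gi a b * dg b k)" for k
    using product[of a k] by (simp add: sum.distrib eq_neg_iff_add_eq_0 add.commute)
  have s2: "(\<Sum>b\<in>UNIV. gi a b * dg b k)
      = (\<Sum>f\<in>UNIV. T f * g f k) + (\<Sum>f\<in>UNIV. \<Gamma> f e k * (\<Sum>b\<in>UNIV. gi a b * g b f))" for k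
    unfolding compat T_def sum_3 by (simp add: algebra_simps)
  have s3: "(\<Sum>f\<in>UNIV. \<Gamma> f e k * (\<Sum>b\<in>UNIV. gi a b * g b f)) = \<Gamma> a e k" for k
    unfolding inv2 by (rule sum_mult_delta(2))
  have "dgi a c = (\<Sum>k\<in>UNIV. (\<Sum>b\<in>UNIV. dgi a b * g b k) * gi k c)"
    by (rule sum_contract_inverse[OF inv1, symmetric])
  also have "\<dots> = (\<Sum>k\<in>UNIV. (- ((\<Sum>f\<in>UNIV. T f * g f k) + \<Gamma> a e k)) * gi k c)"
    unfolding s1 s2 s3 ..
  also have "\<dots> = - ((\<Sum>k\<in>UNIV. (\<Sum>f\<in>UNIV. T f * g f k) * gi k c) + (\<Sum>k\<in>UNIV. \<Gamma> a e k * gi k c))"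
    by (simp add: left_diff_distrib sum_subtractf sum_negf)
  also have "\<dots> = - (T c + (\<Sum>k\<in>UNIV. \<Gamma> a e k * gi k c))"
    unfolding sum_contract_inverse[OF inv1] ..
  also have "\<dots> = - (\<Sum>f\<in>UNIV. \<Gamma> a e f * gi f c + \<Gamma> c e f * gi a f)"
    unfolding T_def sum_3 by (simp add: algebra_simps Gs gis)
  finally show ?thesis .
qed

section \<open>Riemannian geometry in a chart\<close>

locale metric_chart =
  fixes U :: "(real^3) set" and G :: "real^3 \<Rightarrow> real^3^3"
  assumes smooth_metric: "smooth_metric U G"
begin

lemma open_U: "open U"
  using smooth_metric by (simp add: smooth_metric_def)

lemma smooth_G: "smooth_on U (\<lambda>y. G y $ a $ b)"
  using smooth_metric by (simp add: smooth_metric_def)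

lemma G_sym:
  assumes "y \<in> U" shows "G y $ a $ b = G y $ b $ a"
proof -
  have "transpose (G y) = G y" using smooth_metric assms by (simp add: smooth_metric_def)
  then have "transpose (G y) $ a $ b = G y $ a $ b" by simp
  then show ?thesis by (simp add: transpose_def)
qed

lemma det_G_nonzero: "y \<in> U \<Longrightarrow> det (G y) \<noteq> 0"
  using smooth_metric by (simp add: smooth_metric_def)

lemma ginv_G:
  assumes "y \<in> U" shows "(\<Sum>b\<in>UNIV. ginv G y $ a $ b * G y $ b $ c) = (if a = c then 1 else 0)"
  unfolding ginv_def using matrix_inv_3[OF det_G_nonzero[OF assms]] adjugate3_left[of "G y" a c]
    det_G_nonzero[OF assms]
  by (simp add: sum_divide_distrib[symmetric])

lemma G_ginv:
  assumes "y \<in> U" shows "(\<Sum>b\<in>UNIV. G y $ a $ b * ginv G y $ b $ c) = (if a = c then 1 else 0)"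
  unfolding ginv_def using matrix_inv_3[OF det_G_nonzero[OF assms]] adjugate3_right[of "G y" a c]
    det_G_nonzero[OF assms]
  by (simp add: sum_divide_distrib[symmetric] sum_distrib_left)

lemma ginv_sym: "y \<in> U \<Longrightarrow> ginv G y $ a $ b = ginv G y $ b $ a"
  unfolding ginv_def using matrix_inv_3[OF det_G_nonzero] G_sym by (simp add: adjugate3_def)

lemma smooth_ginv: "smooth_on U (\<lambda>y. ginv G y $ a $ b)"
proof -
  have "smooth_on U (\<lambda>y. det (G y))"
    unfolding det_3 by (intro smooth_on_intros open_U smooth_G)
  then have "smooth_on U (\<lambda>y. adjugate3 (G y) a b * inverse (det (G y)))"
    unfolding adjugate3_def
    by (intro smooth_on_intros open_U smooth_G smooth_on_inverse ballI det_G_nonzero)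
  then show ?thesis
    by (rule smooth_on_cong[OF open_U, rotated]) (simp add: ginv_def matrix_inv_3 det_G_nonzero divide_inverse)
qed

lemma smooth_christ: "smooth_on U (christ G c a b)"
  unfolding christ_def[abs_def] by (intro smooth_on_intros open_U smooth_G smooth_ginv)

lemma smooth_riem: "smooth_on U (riem G a b d c)"
  unfolding riem_def[abs_def] by (intro smooth_on_intros open_U smooth_christ)

lemma smooth_ricci: "smooth_on U (ricci G a b)"
  unfolding ricci_def[abs_def] by (intro smooth_on_intros open_U smooth_riem)

lemma smooth_scal: "smooth_on U (scal G)"
  unfolding scal_def[abs_def] by (intro smooth_on_intros open_U smooth_ricci smooth_ginv)

lemma smooth_Phi: "smooth_on U (Phi G a b)"
  unfolding Phi_def[abs_def] by (intro smooth_on_intros open_U smooth_ricci smooth_scal smooth_G)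

lemma smooth_Sfun: "smooth_on U (Sfun G)"
proof -
  have "Sfun G = (\<lambda>x. (1/12) * scal G x)" by (rule ext) (simp add: Sfun_def)
  then show ?thesis by (simp only:) (intro smooth_on_intros open_U smooth_scal)
qed

lemmas differentiable_at =
  smooth_on_differentiable[OF smooth_G] smooth_on_differentiable[OF smooth_ginv]
  smooth_on_differentiable[OF smooth_christ] smooth_on_differentiable[OF smooth_on_pd[OF smooth_christ]]
  smooth_on_differentiable[OF smooth_on_pd[OF smooth_G]] smooth_on_differentiable[OF smooth_riem]
  smooth_on_differentiable[OF smooth_ricci] smooth_on_differentiable[OF smooth_scal]
  smooth_on_differentiable[OF smooth_Phi] smooth_on_differentiable[OF smooth_Sfun]

lemma pd_G_sym: "y \<in> U \<Longrightarrow> pd e (\<lambda>z. G z $ a $ b) y = pd e (\<lambda>z. G z $ b $ a) y"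
  by (rule pd_cong[OF open_U]) (auto simp: G_sym)

lemma christ_sym: "y \<in> U \<Longrightarrow> christ G c a b y = christ G c b a y"
  unfolding christ_def by (simp add: algebra_simps pd_G_sym)

lemma pd_christ_sym: "y \<in> U \<Longrightarrow> pd e (christ G c a b) y = pd e (christ G c b a) y"
  by (rule pd_cong[OF open_U]) (auto simp: christ_sym)

lemma metric_compat:
  assumes y: "y \<in> U"
  shows "pd e (\<lambda>z. G z $ a $ b) y = (\<Sum>f\<in>UNIV. christ G f e a y * G y $ f $ b + christ G f e b y * G y $ a $ f)"
  by (rule metric_compat_expr[where g="\<lambda>a b. G y $ a $ b" and gi="\<lambda>a b. ginv G y $ a $ b"
        and dg="\<lambda>e a b. pd e (\<lambda>z. G z $ a $ b) y" and \<Gamma>="\<lambda>c a b. christ G c a b y",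
        OF G_sym[OF y] ginv_sym[OF y] ginv_G[OF y] pd_G_sym[OF y]])
     (simp add: christ_def)

lemma pd_metric_compat:
  assumes y: "y \<in> U"
  shows "pd f (pd e (\<lambda>z. G z $ a $ b)) y = (\<Sum>h\<in>UNIV.
     pd f (christ G h e a) y * G y $ h $ b + christ G h e a y * pd f (\<lambda>z. G z $ h $ b) y
   + pd f (christ G h e b) y * G y $ a $ h + christ G h e b y * pd f (\<lambda>z. G z $ a $ h) y)"
proof -
  have "pd f (pd e (\<lambda>z. G z $ a $ b)) y
      = pd f (\<lambda>z. \<Sum>h\<in>UNIV. christ G h e a z * G z $ h $ b + christ G h e b z * G z $ a $ h) y"
    by (rule pd_cong[OF open_U y]) (rule metric_compat)
  then show ?thesis using y by (simp add: pd_rules differentiable_at algebra_simps)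
qed

lemma pd_pd_G_commute: "y \<in> U \<Longrightarrow> pd f (pd e (\<lambda>z. G z $ a $ b)) y = pd e (pd f (\<lambda>z. G z $ a $ b)) y"
  by (rule pd_commute[OF open_U]) (auto intro: differentiable_at)

lemma riem_eq_expr:
  "riem G a b d c y = riem_expr (\<lambda>c a b. christ G c a b y) (\<lambda>e c a b. pd e (christ G c a b) y) a b d c"
  by (simp add: riem_def riem_expr_def)

lemma riem_antisym: "riem G a b d c y = - riem G b a d c y"
  unfolding riem_eq_expr by (rule riem_expr_antisym)

lemma riem_bianchi1: "y \<in> U \<Longrightarrow> riem G a b d c y + riem G b d a c y + riem G d a b c y = 0"
  unfolding riem_eq_expr by (rule riem_expr_bianchi1) (auto intro: christ_sym pd_christ_sym)

definition riem_low :: "real^3 \<Rightarrow> 3 \<Rightarrow> 3 \<Rightarrow> 3 \<Rightarrow> 3 \<Rightarrow> real" where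
  "riem_low y a b d c = (\<Sum>h\<in>UNIV. riem G a b d h y * G y $ h $ c)"

lemma riem_low_antisym1: "riem_low y a b d c = - riem_low y b a d c"
  unfolding riem_low_def by (subst riem_antisym) (simp add: sum_negf)

lemma riem_low_antisym2:
  assumes y: "y \<in> U"
  shows "riem_low y a b d c = - riem_low y a b c d"
proof -
  have "(\<Sum>h\<in>UNIV. riem_expr (\<lambda>c a b. christ G c a b y) (\<lambda>e c a b. pd e (christ G c a b) y) a b d h * G y $ h $ c)
     + (\<Sum>h\<in>UNIV. riem_expr (\<lambda>c a b. christ G c a b y) (\<lambda>e c a b. pd e (christ G c a b) y) a b c h * G y $ h $ d) = 0"
    by (rule riem_expr_lowered_antisym[where dg="\<lambda>e a b. pd e (\<lambda>z. G z $ a $ b) y"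
          and ddg="\<lambda>f e a b. pd f (pd e (\<lambda>z. G z $ a $ b)) y",
          OF G_sym[OF y] christ_sym[OF y] metric_compat[OF y] pd_metric_compat[OF y] pd_pd_G_commute[OF y]])
  then show ?thesis unfolding riem_low_def riem_eq_expr by simp
qed

lemma riem_low_pair_sym:
  assumes y: "y \<in> U"
  shows "riem_low y a b d c = riem_low y d c a b"
proof (rule algebraic_curvature_pair_sym)
  show "riem_low y a b d c = - riem_low y b a d c" for a b d c by (rule riem_low_antisym1)
  show "riem_low y a b d c = - riem_low y a b c d" for a b d c by (rule riem_low_antisym2[OF y])
  show "riem_low y a b d c + riem_low y b d a c + riem_low y d a b c = 0" for a b d c
  proof -
    have "riem_low y a b d c + riem_low y b d a c + riem_low y d a b c =
       (\<Sum>h\<in>UNIV. (riem G a b d h y + riem G b d a h y + riem G d a b h y) * G y $ h $ c)"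
      unfolding riem_low_def by (simp add: sum.distrib algebra_simps)
    also have "\<dots> = 0" by (simp add: riem_bianchi1[OF y])
    finally show ?thesis .
  qed
qed

lemma riem_raise: "y \<in> U \<Longrightarrow> riem G a b d c y = (\<Sum>h\<in>UNIV. riem_low y a b d h * ginv G y $ h $ c)"
  unfolding riem_low_def
  by (rule sum_contract_inverse[where A="\<lambda>a b. G y $ a $ b" and B="\<lambda>a b. ginv G y $ a $ b",
        OF G_ginv, symmetric])

lemma ricci_sym:
  assumes y: "y \<in> U"
  shows "ricci G a d y = ricci G d a y"
proof -
  have "ricci G d a y = (\<Sum>b\<in>UNIV. \<Sum>h\<in>UNIV. riem_low y d b a h * ginv G y $ h $ b)"
    unfolding ricci_def riem_raise[OF y] ..
  also have "\<dots> = (\<Sum>h\<in>UNIV. \<Sum>b\<in>UNIV. riem_low y d b a h * ginv G y $ h $ b)" by (rule sum.swap)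
  also have "\<dots> = (\<Sum>h\<in>UNIV. \<Sum>b\<in>UNIV. riem_low y a h d b * ginv G y $ b $ h)"
    by (intro sum.cong refl) (simp add: riem_low_pair_sym[OF y, of d] ginv_sym[OF y])
  also have "\<dots> = ricci G a d y"
    unfolding ricci_def riem_raise[OF y] ..
  finally show ?thesis by simp
qed

lemma Phi_sym: "y \<in> U \<Longrightarrow> Phi G a b y = Phi G b a y"
  unfolding Phi_def using ricci_sym G_sym by metis

lemma trace_Phi:
  assumes y: "y \<in> U"
  shows "(\<Sum>a\<in>UNIV. \<Sum>b\<in>UNIV. ginv G y $ a $ b * Phi G a b y) = 0"
proof -
  have "(\<Sum>b\<in>UNIV. ginv G y $ a $ b * G y $ a $ b) = 1" for a
    using ginv_G[OF y, of a a] by (simp add: G_sym[OF y, of a])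
  then have "(\<Sum>a\<in>UNIV. \<Sum>b\<in>UNIV. ginv G y $ a $ b * G y $ a $ b) = 3" by (simp add: sum_3)
  moreover have "(\<Sum>a\<in>UNIV. \<Sum>b\<in>UNIV. ginv G y $ a $ b * Phi G a b y)
      = (\<Sum>a\<in>UNIV. \<Sum>b\<in>UNIV. ginv G y $ a $ b * ricci G a b y)
        - (1/3) * scal G y * (\<Sum>a\<in>UNIV. \<Sum>b\<in>UNIV. ginv G y $ a $ b * G y $ a $ b)"
    unfolding Phi_def by (simp add: right_diff_distrib sum_subtractf sum_distrib_left mult_ac)
  ultimately show ?thesis by (simp add: scal_def)
qed

lemma riem_trace:
  assumes y: "y \<in> U"
  shows "(\<Sum>a\<in>UNIV. \<Sum>d\<in>UNIV. ginv G y $ a $ d * riem G e a d c y) = - (\<Sum>h\<in>UNIV. ricci G h e y * ginv G y $ h $ c)"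
proof -
  have K: "(\<Sum>a\<in>UNIV. \<Sum>d\<in>UNIV. ginv G y $ a $ d * riem_low y e a d h) = - ricci G h e y" for h
  proof -
    have "(\<Sum>a\<in>UNIV. \<Sum>d\<in>UNIV. ginv G y $ a $ d * riem_low y e a d h)
        = (\<Sum>a\<in>UNIV. \<Sum>d\<in>UNIV. - (ginv G y $ a $ d * riem_low y h d e a))"
      by (intro sum.cong refl) (subst riem_low_pair_sym[OF y], subst riem_low_antisym1, simp)
    also have "\<dots> = - (\<Sum>d\<in>UNIV. \<Sum>a\<in>UNIV. (\<Sum>k\<in>UNIV. riem G h d e k y * G y $ k $ a) * ginv G y $ a $ d)"
      unfolding riem_low_def sum_negf by (subst sum.swap) (simp add: mult.commute)
    also have "\<dots> = - (\<Sum>d\<in>UNIV. riem G h d e d y)"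
      by (simp add: sum_contract_inverse[where A="\<lambda>a b. G y $ a $ b" and B="\<lambda>a b. ginv G y $ a $ b", OF G_ginv[OF y]])
    finally show ?thesis by (simp add: ricci_def)
  qed
  have "(\<Sum>a\<in>UNIV. \<Sum>d\<in>UNIV. ginv G y $ a $ d * riem G e a d c y)
     = (\<Sum>a\<in>UNIV. \<Sum>d\<in>UNIV. ginv G y $ a $ d * (\<Sum>h\<in>UNIV. riem_low y e a d h * ginv G y $ h $ c))"
    unfolding riem_raise[OF y] ..
  also have "\<dots> = (\<Sum>h\<in>UNIV. (\<Sum>a\<in>UNIV. \<Sum>d\<in>UNIV. ginv G y $ a $ d * riem_low y e a d h) * ginv G y $ h $ c)"
    unfolding sum_3 by (simp add: algebra_simps)
  also have "\<dots> = - (\<Sum>h\<in>UNIV. ricci G h e y * ginv G y $ h $ c)"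
    unfolding K by (simp add: sum_negf)
  finally show ?thesis .
qed

context
  fixes x assumes x: "x \<in> U"
begin

abbreviation "\<Gamma>x \<equiv> (\<lambda>c a b. christ G c a b x)"
abbreviation "d\<Gamma>x \<equiv> (\<lambda>e c a b. pd e (christ G c a b) x)"
abbreviation "Rx \<equiv> (\<lambda>a b d c. riem G a b d c x)"
abbreviation "dRx \<equiv> (\<lambda>e a b d c. pd e (riem G a b d c) x)"
abbreviation "Ricx \<equiv> (\<lambda>a d. ricci G a d x)"
abbreviation "dRicx \<equiv> (\<lambda>e a d. pd e (ricci G a d) x)"

lemma pd_ginv:
  "pd e (\<lambda>z. ginv G z $ a $ b) x = - (\<Sum>f\<in>UNIV. christ G a e f x * ginv G x $ f $ b + christ G b e f x * ginv G x $ a $ f)"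
proof (rule inverse_metric_deriv_expr[where g="\<lambda>a b. G x $ a $ b" and gi="\<lambda>a b. ginv G x $ a $ b"
      and dg="\<lambda>a b. pd e (\<lambda>z. G z $ a $ b) x" and dgi="\<lambda>a b. pd e (\<lambda>z. ginv G z $ a $ b) x",
      OF G_ginv[OF x] ginv_G[OF x] metric_compat[OF x] _ christ_sym[OF x] ginv_sym[OF x]])
  fix a c
  have "pd e (\<lambda>z. \<Sum>b\<in>UNIV. ginv G z $ a $ b * G z $ b $ c) x = pd e (\<lambda>z. if a = c then 1 else 0) x"
    by (rule pd_cong[OF open_U x]) (rule ginv_G)
  then show "(\<Sum>b\<in>UNIV. ginv G x $ a $ b * pd e (\<lambda>z. G z $ b $ c) x + pd e (\<lambda>z. ginv G z $ a $ b) x * G x $ b $ c) = 0"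
    using x by (simp add: pd_rules differentiable_at)
qed

lemma pd_riem_eq_expr:
  "pd e (riem G a b d c) x = riem_deriv_expr \<Gamma>x d\<Gamma>x (\<lambda>f e c a b. pd f (pd e (christ G c a b)) x) e a b d c"
  unfolding riem_def[abs_def] using x by (simp add: pd_rules differentiable_at riem_deriv_expr_def algebra_simps)

lemma pd_pd_christ_commute: "pd f (pd e (christ G c a b)) x = pd e (pd f (christ G c a b)) x"
  by (rule pd_commute[OF open_U x]) (auto intro: differentiable_at x)

lemma riem_bianchi2: "cov_riem_expr \<Gamma>x Rx dRx e a b d c + cov_riem_expr \<Gamma>x Rx dRx a b e d c
    + cov_riem_expr \<Gamma>x Rx dRx b e a d c = 0"
proof -
  have R: "Rx = riem_expr \<Gamma>x d\<Gamma>x" by (intro ext) (rule riem_eq_expr)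
  have dR: "dRx = riem_deriv_expr \<Gamma>x d\<Gamma>x (\<lambda>f e c a b. pd f (pd e (christ G c a b)) x)"
    by (intro ext) (rule pd_riem_eq_expr)
  show ?thesis unfolding R dR
    by (rule riem_expr_bianchi2) (auto intro: christ_sym[OF x] pd_christ_sym[OF x] pd_pd_christ_commute)
qed

lemma pd_riem_antisym: "pd e (riem G a b d c) x + pd e (riem G b a d c) x = 0"
proof -
  have "riem G b a d c = (\<lambda>z. - riem G a b d c z)" by (rule ext) (subst riem_antisym, simp)
  then show ?thesis using x by (simp add: pd_minus differentiable_at)
qed

lemma pd_ricci: "pd e (ricci G a d) x = (\<Sum>b\<in>UNIV. pd e (riem G a b d b) x)"
  unfolding ricci_def[abs_def] using x by (simp add: pd_rules differentiable_at)

lemma pd_ricci_sym: "pd e (ricci G a d) x = pd e (ricci G d a) x"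
  by (rule pd_cong[OF open_U x]) (rule ricci_sym)

lemma pd_riem_trace:
  "(\<Sum>a\<in>UNIV. \<Sum>d\<in>UNIV. pd b (\<lambda>z. ginv G z $ a $ d) x * riem G e a d c x + ginv G x $ a $ d * pd b (riem G e a d c) x)
   = - (\<Sum>h\<in>UNIV. pd b (ricci G h e) x * ginv G x $ h $ c + ricci G h e x * pd b (\<lambda>z. ginv G z $ h $ c) x)"
proof -
  have "pd b (\<lambda>z. \<Sum>a\<in>UNIV. \<Sum>d\<in>UNIV. ginv G z $ a $ d * riem G e a d c z) x
     = pd b (\<lambda>z. - (\<Sum>h\<in>UNIV. ricci G h e z * ginv G z $ h $ c)) x"
    by (rule pd_cong[OF open_U x]) (rule riem_trace)
  then show ?thesis using x by (simp add: pd_rules differentiable_at algebra_simps)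
qed

lemma pd_scal: "pd e (scal G) x = (\<Sum>a\<in>UNIV. \<Sum>d\<in>UNIV.
    pd e (\<lambda>z. ginv G z $ a $ d) x * ricci G a d x + ginv G x $ a $ d * pd e (ricci G a d) x)"
  unfolding scal_def[abs_def] using x by (simp add: pd_rules differentiable_at algebra_simps)

lemma pd_Sfun: "pd b (Sfun G) x = pd b (scal G) x / 12"
  unfolding Sfun_def[abs_def] using x by (simp add: pd_divide_const differentiable_at)

lemma nablaPhi_eq_cov_ricci: "nablaPhi G d a b x = cov_ricci_expr \<Gamma>x Ricx dRicx d a b
    - (1/3) * pd d (scal G) x * G x $ a $ b"
proof -
  have "pd d (Phi G a b) x = pd d (ricci G a b) x
      - (1/3) * (pd d (scal G) x * G x $ a $ b + scal G x * pd d (\<lambda>z. G z $ a $ b) x)"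
  proof -
    have "Phi G a b = (\<lambda>z. ricci G a b z - ((1/3) * scal G z) * G z $ a $ b)"
      by (rule ext) (simp add: Phi_def)
    then show ?thesis using x by (simp add: pd_rules pd_divide_const differentiable_at algebra_simps)
  qed
  then show ?thesis
    unfolding nablaPhi_def metric_compat[OF x] cov_ricci_expr_def Phi_def sum_3 by (simp add: algebra_simps)
qed

theorem contracted_bianchi:
  "(\<Sum>a\<in>UNIV. \<Sum>d\<in>UNIV. ginv G x $ a $ d * nablaPhi G d a b x) = 2 * pd b (Sfun G) x"
proof -
  have ricci_part: "(\<Sum>a\<in>UNIV. \<Sum>d\<in>UNIV. ginv G x $ a $ d * cov_ricci_expr \<Gamma>x Ricx dRicx d a b)
      = pd b (scal G) x / 2"
  proof (rule contracted_bianchi_expr[where R=Rx and dR=dRx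
        and dgi="\<lambda>e a b. pd e (\<lambda>z. ginv G z $ a $ b) x",
        OF christ_sym[OF x] ginv_sym[OF x] _ ricci_sym[OF x] pd_ricci_sym pd_ginv riem_trace[OF x]
           pd_riem_trace pd_scal])
    show "cov_ricci_expr \<Gamma>x Ricx dRicx e a d - cov_ricci_expr \<Gamma>x Ricx dRicx a e d
        + (\<Sum>b\<in>UNIV. cov_riem_expr \<Gamma>x Rx dRx b e a d b) = 0" for e a d
    proof (rule contracted_bianchi_once_expr[OF riem_bianchi2 refl _ pd_riem_antisym])
      show "riem G a b d c x + riem G b a d c x = 0" for a b d c by (subst riem_antisym) simp
      show "Ricx = (\<lambda>a d. \<Sum>b\<in>UNIV. Rx a b d b)" by (simp add: fun_eq_iff ricci_def)
      show "dRicx = (\<lambda>e a d. \<Sum>b\<in>UNIV. dRx e a b d b)" by (simp add: fun_eq_iff pd_ricci)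
    qed
  qed
  have metric_part: "(\<Sum>a\<in>UNIV. \<Sum>d\<in>UNIV. ginv G x $ a $ d * (pd d (scal G) x * G x $ a $ b)) = pd b (scal G) x"
  proof -
    have "(\<Sum>a\<in>UNIV. \<Sum>d\<in>UNIV. ginv G x $ a $ d * (pd d (scal G) x * G x $ a $ b))
       = (\<Sum>d\<in>UNIV. pd d (scal G) x * (\<Sum>a\<in>UNIV. G x $ b $ a * ginv G x $ a $ d))"
      unfolding sum_3 by (simp add: algebra_simps G_sym[OF x, of _ b])
    also have "\<dots> = pd b (scal G) x" unfolding G_ginv[OF x] by (rule sum_mult_delta(2))
    finally show ?thesis .
  qed
  have "(\<Sum>a\<in>UNIV. \<Sum>d\<in>UNIV. ginv G x $ a $ d * nablaPhi G d a b x)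
     = (\<Sum>a\<in>UNIV. \<Sum>d\<in>UNIV. ginv G x $ a $ d * cov_ricci_expr \<Gamma>x Ricx dRicx d a b)
      - (1/3) * (\<Sum>a\<in>UNIV. \<Sum>d\<in>UNIV. ginv G x $ a $ d * (pd d (scal G) x * G x $ a $ b))"
    unfolding nablaPhi_eq_cov_ricci sum_3 by (simp add: algebra_simps)
  also have "\<dots> = pd b (scal G) x / 2 - (1/3) * pd b (scal G) x"
    unfolding ricci_part metric_part ..
  finally show ?thesis unfolding pd_Sfun by simp
qed

end

end

section \<open>Linear algebra in a null frame\<close>

definition bilin :: "('n::finite \<Rightarrow> 'n \<Rightarrow> 'a::comm_semiring_1) \<Rightarrow> ('n \<Rightarrow> 'a) \<Rightarrow> ('n \<Rightarrow> 'a) \<Rightarrow> 'a" where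
  "bilin B u v = (\<Sum>a\<in>UNIV. \<Sum>b\<in>UNIV. B a b * u a * v b)"

definition lower :: "('n::finite \<Rightarrow> 'n \<Rightarrow> 'a::comm_semiring_1) \<Rightarrow> ('n \<Rightarrow> 'a) \<Rightarrow> 'n \<Rightarrow> 'a" where
  "lower B u a = (\<Sum>d\<in>UNIV. B a d * u d)"

lemma bilin_sym:
  assumes "\<And>a b. B a b = B b a"
  shows "bilin B u v = bilin B v u"
proof -
  have "bilin B u v = (\<Sum>b\<in>UNIV. \<Sum>a\<in>UNIV. B a b * u a * v b)"
    unfolding bilin_def by (rule sum.swap)
  also have "\<dots> = bilin B v u"
    unfolding bilin_def by (intro sum.cong refl) (subst assms, simp add: mult_ac)
  finally show ?thesis .
qed

lemma bilin_add_right: "bilin B u (\<lambda>b. \<alpha> * v b + \<beta> * w b) = \<alpha> * bilin B u v + \<beta> * bilin B u w"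
  unfolding bilin_def by (simp add: algebra_simps sum.distrib sum_distrib_left)

lemma bilin_add_left: "bilin B (\<lambda>b. \<alpha> * v b + \<beta> * w b) u = \<alpha> * bilin B v u + \<beta> * bilin B w u"
  unfolding bilin_def by (simp add: algebra_simps sum.distrib sum_distrib_left)

text \<open>The proof inverts the Gram matrix of the frame.\<close>

lemma inverse_metric_null_frame:
  fixes g gi :: "3 \<Rightarrow> 3 \<Rightarrow> complex" and k l n :: "3 \<Rightarrow> complex"
  assumes g_sym: "\<And>a b. g a b = g b a"
    and inv: "\<And>a c. (\<Sum>b\<in>UNIV. g a b * gi b c) = (if a = c then 1 else 0)"
    and frame: "bilin g k l = 1" "bilin g n n = -1/2" "bilin g k k = 0" "bilin g l l = 0"
      "bilin g k n = 0" "bilin g l n = 0"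
  shows "gi a b = k a * l b + l a * k b - 2 * n a * n b"
proof -
  define Gm :: "complex^3^3" where "Gm = (\<chi> a b. g a b)"
  define Gi :: "complex^3^3" where "Gi = (\<chi> a b. gi a b)"
  define col :: "3 \<Rightarrow> 3 \<Rightarrow> complex" where "col i = (if i = 1 then k else if i = 2 then l else n)" for i
  define M :: "complex^3^3" where "M = (\<chi> a i. col i a)"
  define Fi :: "complex^3^3" where
    "Fi = (\<chi> i j. if (i = 1 \<and> j = 2) \<or> (i = 2 \<and> j = 1) then 1 else if i = 3 \<and> j = 3 then -2 else 0)"
  have gsym: "bilin g u v = bilin g v u" for u v by (rule bilin_sym[OF g_sym])
  have gram: "(transpose M ** Gm ** M) $ i $ j = bilin g (col i) (col j)" for i j
    unfolding bilin_def matrix_matrix_mult_def transpose_def M_def Gm_def sum_3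
    by (simp add: algebra_simps)
  have "\<forall>i j. (\<Sum>m\<in>UNIV. bilin g (col i) (col m) * Fi $ m $ j) = mat 1 $ i $ j"
    unfolding forall_3 sum_3 Fi_def col_def mat_def
    by (simp add: frame gsym[of l k] gsym[of n k] gsym[of n l])
  then have "(transpose M ** Gm ** M) ** Fi = mat 1"
    by (simp add: vec_eq_iff matrix_matrix_mult_def[of "transpose M ** Gm ** M"] gram)
  then have "(transpose M ** Gm) ** (M ** Fi) = mat 1" by (simp add: matrix_mul_assoc)
  then have "(M ** Fi) ** (transpose M ** Gm) = mat 1" using matrix_left_right_inverse by blast
  then have left_inv: "(M ** Fi ** transpose M) ** Gm = mat 1" by (simp add: matrix_mul_assoc)
  have right_inv: "Gm ** Gi = mat 1"
    by (simp add: vec_eq_iff matrix_matrix_mult_def Gm_def Gi_def mat_def inv)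
  have "M ** Fi ** transpose M = (M ** Fi ** transpose M) ** (Gm ** Gi)"
    by (simp add: right_inv matrix_mul_rid)
  also have "\<dots> = ((M ** Fi ** transpose M) ** Gm) ** Gi" by (rule matrix_mul_assoc)
  also have "\<dots> = Gi" unfolding left_inv by (rule matrix_mul_lid)
  finally have "gi a b = (M ** Fi ** transpose M) $ a $ b" by (simp add: Gi_def)
  also have "\<dots> = k a * l b + l a * k b - 2 * n a * n b"
    unfolding matrix_matrix_mult_def transpose_def M_def Fi_def col_def sum_3 by (simp add: algebra_simps)
  finally show ?thesis .
qed

locale null_frame_algebra =
  fixes g gi :: "3 \<Rightarrow> 3 \<Rightarrow> complex" and k l n :: "3 \<Rightarrow> complex"
  assumes g_sym: "\<And>a b. g a b = g b a"
    and g_gi: "\<And>a c. (\<Sum>b\<in>UNIV. g a b * gi b c) = (if a = c then 1 else 0)"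
    and gi_g: "\<And>a c. (\<Sum>b\<in>UNIV. gi a b * g b c) = (if a = c then 1 else 0)"
    and kl: "bilin g k l = 1" and nn: "bilin g n n = -1/2" and kk: "bilin g k k = 0"
    and ll: "bilin g l l = 0" and kn: "bilin g k n = 0" and ln: "bilin g l n = 0"
begin

lemma gi_frame: "gi a b = k a * l b + l a * k b - 2 * n a * n b"
  using inverse_metric_null_frame[OF g_sym g_gi kl nn kk ll kn ln] .

lemma g_bilin_sym: "bilin g u v = bilin g v u"
  using bilin_sym[of g, OF g_sym] .

lemma frame_decomposition: "u a = k a * bilin g l u + l a * bilin g k u - 2 * n a * bilin g n u"
proof -
  have "u a = (\<Sum>d\<in>UNIV. (\<Sum>b\<in>UNIV. gi a b * g b d) * u d)" unfolding gi_g by (simp add: sum_mult_delta)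
  also have "\<dots> = k a * bilin g l u + l a * bilin g k u - 2 * n a * bilin g n u"
    unfolding gi_frame bilin_def sum_3 by (simp add: algebra_simps)
  finally show ?thesis .
qed

lemma covector_frame_decomposition:
  "w a = (\<Sum>d\<in>UNIV. g a d * (k d * (\<Sum>b\<in>UNIV. l b * w b) + l d * (\<Sum>b\<in>UNIV. k b * w b)
     - 2 * n d * (\<Sum>b\<in>UNIV. n b * w b)))"
proof -
  have "w a = (\<Sum>b\<in>UNIV. (\<Sum>d\<in>UNIV. g a d * gi d b) * w b)" unfolding g_gi by (simp add: sum_mult_delta)
  also have "\<dots> = (\<Sum>d\<in>UNIV. g a d * (k d * (\<Sum>b\<in>UNIV. l b * w b) + l d * (\<Sum>b\<in>UNIV. k b * w b)
      - 2 * n d * (\<Sum>b\<in>UNIV. n b * w b)))"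
    unfolding gi_frame sum_3 by (simp add: algebra_simps)
  finally show ?thesis .
qed

lemma perp_k_decomposition: "bilin g k u = 0 \<Longrightarrow> u = (\<lambda>a. bilin g l u * k a + (- 2 * bilin g n u) * n a)"
  by (rule ext) (subst frame_decomposition, simp add: algebra_simps)

end

text \<open>The hypotheses on \<open>P\<close> are those on the trace-free Ricci tensor \<open>\<Phi>\<close> when \<open>k\<close> is a
  principal null direction of multiplicity exactly \<open>2\<close>: \<open>\<Phi>\<^sub>0 = \<Phi>\<^sub>1 = 0 \<noteq> \<Phi>\<^sub>2\<close>.\<close>

locale principal_null_frame = null_frame_algebra +
  fixes P :: "3 \<Rightarrow> 3 \<Rightarrow> complex"
  assumes P_sym: "\<And>a b. P a b = P b a"
    and trace_free: "(\<Sum>a\<in>UNIV. \<Sum>b\<in>UNIV. gi a b * P a b) = 0"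
    and P_kk: "bilin P k k = 0" and P_kn: "bilin P k n = 0" and P_kl: "bilin P k l \<noteq> 0"
begin

definition \<phi> :: complex where "\<phi> = bilin P k l"

lemma P_bilin_sym: "bilin P u v = bilin P v u"
  using bilin_sym[of P, OF P_sym] .

lemma P_k_eq: "(\<Sum>b\<in>UNIV. P a b * k b) = \<phi> * lower g k a"
proof -
  have "(\<Sum>b\<in>UNIV. l b * (\<Sum>c\<in>UNIV. P b c * k c)) = \<phi>"
    using P_bilin_sym[of k l] unfolding \<phi>_def bilin_def sum_3 by (simp add: algebra_simps)
  moreover have "(\<Sum>b\<in>UNIV. k b * (\<Sum>c\<in>UNIV. P b c * k c)) = 0"
    using P_kk unfolding bilin_def sum_3 by (simp add: algebra_simps)
  moreover have "(\<Sum>b\<in>UNIV. n b * (\<Sum>c\<in>UNIV. P b c * k c)) = 0"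
    using P_kn P_bilin_sym[of k n] unfolding bilin_def sum_3 by (simp add: algebra_simps)
  ultimately show ?thesis
    using covector_frame_decomposition[of "\<lambda>a. \<Sum>b\<in>UNIV. P a b * k b" a]
    by (simp add: lower_def sum_3 algebra_simps)
qed

lemma P_k_aligned:
  "lower g k a * (\<Sum>c\<in>UNIV. P b c * k c) - lower g k b * (\<Sum>c\<in>UNIV. P a c * k c) = 0"
  unfolding P_k_eq by (simp add: algebra_simps)

lemma P_nn: "bilin P n n = \<phi>"
proof -
  have "(\<Sum>a\<in>UNIV. \<Sum>b\<in>UNIV. gi a b * P a b) = 2 * \<phi> - 2 * bilin P n n"
    using P_bilin_sym[of k l] unfolding gi_frame \<phi>_def bilin_def sum_3 by (simp add: algebra_simps)
  then show ?thesis using trace_free by simp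
qed

end

text \<open>At a point: \<open>Q e a b = \<nabla>\<^sub>e \<Phi>\<^sub>a\<^sub>b\<close>, \<open>s a = \<nabla>\<^sub>a S\<close> and \<open>Dk e a = \<nabla>\<^sub>e k\<^sup>a\<close>.  The assumptions
  \<open>deriv_P_kk\<close>, \<open>deriv_aligned\<close> and \<open>deriv_null\<close> are the derivatives of \<open>\<Phi>\<^sub>a\<^sub>b k\<^sup>a k\<^sup>b = 0\<close>,
  \<open>k\<^sub>[\<^sub>a \<Phi>\<^sub>b\<^sub>]\<^sub>c k\<^sup>c = 0\<close> and \<open>g\<^sub>a\<^sub>b k\<^sup>a k\<^sup>b = 0\<close>, which hold on a neighbourhood.\<close>

locale principal_null_frame_derivatives = principal_null_frame +
  fixes Q :: "3 \<Rightarrow> 3 \<Rightarrow> 3 \<Rightarrow> complex" and s :: "3 \<Rightarrow> complex" and Dk :: "3 \<Rightarrow> 3 \<Rightarrow> complex"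
  assumes cotton_condition: "\<And>c. (\<Sum>a\<in>UNIV. \<Sum>b\<in>UNIV. k a * k b *
      (- (Q b c a - Q c b a) + g a b * s c - g a c * s b + 3 * g b c * s a)) = 0"
    and contracted_bianchi: "\<And>b. (\<Sum>a\<in>UNIV. \<Sum>d\<in>UNIV. gi a d * Q d a b) = 2 * s b"
    and deriv_P_kk: "\<And>c. (\<Sum>a\<in>UNIV. \<Sum>b\<in>UNIV. Q c a b * k a * k b)
      + 2 * (\<Sum>a\<in>UNIV. \<Sum>b\<in>UNIV. P a b * Dk c a * k b) = 0"
    and deriv_aligned: "\<And>e a b.
        lower g (Dk e) a * (\<Sum>c\<in>UNIV. P b c * k c) + lower g k a * (\<Sum>c\<in>UNIV. Q e b c * k c)
          + lower g k a * (\<Sum>c\<in>UNIV. P b c * Dk e c)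
      - (lower g (Dk e) b * (\<Sum>c\<in>UNIV. P a c * k c) + lower g k b * (\<Sum>c\<in>UNIV. Q e a c * k c)
          + lower g k b * (\<Sum>c\<in>UNIV. P a c * Dk e c)) = 0"
    and deriv_null: "\<And>c. bilin g k (Dk c) = 0"
begin

definition along :: "(3 \<Rightarrow> complex) \<Rightarrow> 3 \<Rightarrow> complex" where
  "along u a = (\<Sum>e\<in>UNIV. u e * Dk e a)"

definition Q3 :: "(3 \<Rightarrow> complex) \<Rightarrow> (3 \<Rightarrow> complex) \<Rightarrow> (3 \<Rightarrow> complex) \<Rightarrow> complex" where
  "Q3 u v w = (\<Sum>e\<in>UNIV. \<Sum>b\<in>UNIV. \<Sum>c\<in>UNIV. u e * v b * w c * Q e b c)"

lemma along_add: "along (\<lambda>b. \<alpha> * v b + \<beta> * w b) = (\<lambda>a. \<alpha> * along v a + \<beta> * along w a)"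
  unfolding along_def by (simp add: fun_eq_iff algebra_simps sum.distrib sum_distrib_left)

lemma k_perp_along: "bilin g k (along u) = 0"
proof -
  have "bilin g k (along u) = (\<Sum>c\<in>UNIV. u c * bilin g k (Dk c))"
    unfolding bilin_def along_def sum_3 by (simp add: algebra_simps)
  then show ?thesis by (simp add: deriv_null)
qed

lemma along_decomposition: "along u = (\<lambda>a. bilin g l (along u) * k a + (- 2 * bilin g n (along u)) * n a)"
  by (rule perp_k_decomposition[OF k_perp_along])

lemma P_n_along: "bilin P n (along u) = - 2 * bilin g n (along u) * \<phi>"
proof -
  have "bilin P n (along u) = bilin g l (along u) * bilin P n k + (- 2 * bilin g n (along u)) * bilin P n n"
    by (subst along_decomposition) (rule bilin_add_right)
  then show ?thesis using P_kn P_bilin_sym[of n k] by (simp add: P_nn)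
qed

lemma Q_u_k_k: "Q3 u k k = 0"
proof -
  have "(\<Sum>c\<in>UNIV. u c * ((\<Sum>a\<in>UNIV. \<Sum>b\<in>UNIV. Q c a b * k a * k b)
      + 2 * (\<Sum>a\<in>UNIV. \<Sum>b\<in>UNIV. P a b * Dk c a * k b))) = 0"
    by (simp add: deriv_P_kk)
  moreover have "(\<Sum>a\<in>UNIV. \<Sum>b\<in>UNIV. P a b * Dk c a * k b) = (\<Sum>a\<in>UNIV. Dk c a * (\<Sum>b\<in>UNIV. P a b * k b))"
    for c unfolding sum_3 by (simp add: algebra_simps)
  moreover have "(\<Sum>c\<in>UNIV. u c * ((\<Sum>a\<in>UNIV. \<Sum>b\<in>UNIV. Q c a b * k a * k b)
      + 2 * (\<Sum>a\<in>UNIV. Dk c a * (\<Sum>b\<in>UNIV. P a b * k b)))) = Q3 u k k + 2 * \<phi> * bilin g (along u) k"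
    unfolding P_k_eq Q3_def bilin_def along_def lower_def sum_3 by (simp add: algebra_simps g_sym)
  ultimately show ?thesis using k_perp_along g_bilin_sym[of "along u" k] by simp
qed

lemma cotton_condition_along: "- Q3 k u k + Q3 u k k + 2 * bilin g k u * (\<Sum>a\<in>UNIV. s a * k a) = 0"
proof -
  have "(\<Sum>c\<in>UNIV. u c * (\<Sum>a\<in>UNIV. \<Sum>b\<in>UNIV. k a * k b *
      (- (Q b c a - Q c b a) + g a b * s c - g a c * s b + 3 * g b c * s a)))
     = - Q3 k u k + Q3 u k k + bilin g k k * (\<Sum>c\<in>UNIV. s c * u c) + 2 * bilin g k u * (\<Sum>a\<in>UNIV. s a * k a)"
    unfolding Q3_def bilin_def sum_3 by (simp add: algebra_simps g_sym)
  moreover have "(\<Sum>c\<in>UNIV. u c * (\<Sum>a\<in>UNIV. \<Sum>b\<in>UNIV. k a * k b *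
      (- (Q b c a - Q c b a) + g a b * s c - g a c * s b + 3 * g b c * s a))) = 0"
    by (simp only: cotton_condition) simp
  ultimately show ?thesis using kk by simp
qed

lemma Q_u_n_k: "Q3 u n k = 3 * \<phi> * bilin g n (along u)"
proof -
  let ?A = "\<lambda>e a. lower g (Dk e) a" and ?B = "\<lambda>a. lower g k a"
  let ?C = "\<lambda>e b. (\<Sum>c\<in>UNIV. Q e b c * k c)" and ?D = "\<lambda>e b. (\<Sum>c\<in>UNIV. P b c * Dk e c)"
  have z: "\<phi> * (?A e a * ?B b - ?A e b * ?B a) + ?B a * (?C e b + ?D e b) - ?B b * (?C e a + ?D e a) = 0"
    for e a b
    using deriv_aligned[of e a b] unfolding P_k_eq by (simp add: algebra_simps)
  have contract: "(\<Sum>e\<in>UNIV. \<Sum>a\<in>UNIV. \<Sum>b\<in>UNIV. u e * p a * q b *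
      (\<phi> * (A e a * B b - A e b * B a) + B a * (C e b + D e b) - B b * (C e a + D e a)))
    = \<phi> * ((\<Sum>e\<in>UNIV. u e * (\<Sum>a\<in>UNIV. p a * A e a)) * (\<Sum>b\<in>UNIV. q b * B b)
        - (\<Sum>e\<in>UNIV. u e * (\<Sum>b\<in>UNIV. q b * A e b)) * (\<Sum>a\<in>UNIV. p a * B a))
      + (\<Sum>a\<in>UNIV. p a * B a) * (\<Sum>e\<in>UNIV. u e * (\<Sum>b\<in>UNIV. q b * (C e b + D e b)))
      - (\<Sum>b\<in>UNIV. q b * B b) * (\<Sum>e\<in>UNIV. u e * (\<Sum>a\<in>UNIV. p a * (C e a + D e a)))"
    for p q :: "3 \<Rightarrow> complex" and A C D :: "3 \<Rightarrow> 3 \<Rightarrow> complex" and B :: "3 \<Rightarrow> complex"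
    unfolding sum_3 by (simp add: algebra_simps)
  have f1: "(\<Sum>e\<in>UNIV. u e * (\<Sum>a\<in>UNIV. p a * ?A e a)) = bilin g (along u) p" for p
    unfolding bilin_def along_def lower_def sum_3 by (simp add: algebra_simps g_sym)
  have f2: "(\<Sum>b\<in>UNIV. q b * ?B b) = bilin g k q" for q
    unfolding bilin_def lower_def sum_3 by (simp add: algebra_simps g_sym)
  have f3: "(\<Sum>e\<in>UNIV. u e * (\<Sum>b\<in>UNIV. q b * (?C e b + ?D e b))) = Q3 u q k + bilin P q (along u)" for q
    unfolding Q3_def bilin_def along_def sum_3 by (simp add: algebra_simps)
  have "0 = (\<Sum>e\<in>UNIV. \<Sum>a\<in>UNIV. \<Sum>b\<in>UNIV. u e * l a * n b *
      (\<phi> * (?A e a * ?B b - ?A e b * ?B a) + ?B a * (?C e b + ?D e b) - ?B b * (?C e a + ?D e a)))"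
    by (simp add: z)
  also have "\<dots> = \<phi> * (bilin g (along u) l * bilin g k n - bilin g (along u) n * bilin g k l)
      + bilin g k l * (Q3 u n k + bilin P n (along u)) - bilin g k n * (Q3 u l k + bilin P l (along u))"
    unfolding contract f1 f2 f3 ..
  finally show ?thesis using P_n_along[of u] by (simp add: kl kn g_bilin_sym[of "along u" n] algebra_simps)
qed

lemma n_along_k: "bilin g n (along k) = 0"
proof -
  have "Q3 k n k = 0" using cotton_condition_along[of n] Q_u_k_k[of n] kn by simp
  then show ?thesis using Q_u_n_k[of k] P_kl by (simp add: \<phi>_def)
qed

lemma n_along_n: "bilin g n (along n) = 0"
proof -
  have "(\<Sum>b\<in>UNIV. k b * (\<Sum>a\<in>UNIV. \<Sum>d\<in>UNIV. gi a d * Q d a b)) = Q3 l k k + Q3 k l k - 2 * Q3 n n k"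
    unfolding gi_frame Q3_def sum_3 by (simp add: algebra_simps)
  moreover have "(\<Sum>b\<in>UNIV. k b * (\<Sum>a\<in>UNIV. \<Sum>d\<in>UNIV. gi a d * Q d a b)) = 2 * (\<Sum>a\<in>UNIV. s a * k a)"
    unfolding contracted_bianchi by (simp add: sum_3 algebra_simps)
  moreover have "Q3 k l k = 2 * (\<Sum>a\<in>UNIV. s a * k a)"
    using cotton_condition_along[of l] Q_u_k_k[of l] kl by simp
  ultimately have "Q3 n n k = 0" using Q_u_k_k[of l] by simp
  then show ?thesis using Q_u_n_k[of n] P_kl by (simp add: \<phi>_def)
qed

lemma along_perp:
  assumes "bilin g u k = 0" and "bilin g v k = 0"
  shows "bilin g (along u) v = 0"
proof -
  have u: "bilin g k u = 0" and v: "bilin g k v = 0" using assms g_bilin_sym by auto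
  have perp_k: "bilin g (along w) k = 0" for w using k_perp_along[of w] g_bilin_sym by simp
  have perp_n: "bilin g (along k) n = 0" "bilin g (along n) n = 0"
    using n_along_k n_along_n g_bilin_sym by auto
  have "bilin g (along w) v = bilin g l v * bilin g (along w) k + (- 2 * bilin g n v) * bilin g (along w) n"
    for w by (subst perp_k_decomposition[OF v]) (rule bilin_add_right)
  then have "bilin g (along k) v = 0" "bilin g (along n) v = 0" by (simp_all add: perp_k perp_n)
  moreover have "bilin g (along u) v
      = bilin g l u * bilin g (along k) v + (- 2 * bilin g n u) * bilin g (along n) v"
    by (subst perp_k_decomposition[OF u], subst along_add) (rule bilin_add_left)
  ultimately show ?thesis by simp
qed

end

section \<open>The generator of the null structure\<close>

lemma order_0_eq_2_coeffs:
  fixes p :: "'a::idom poly"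
  assumes p: "p \<noteq> 0" and ord: "order 0 p = 2"
  shows "coeff p 0 = 0" "coeff p 1 = 0" "coeff p 2 \<noteq> 0"
proof -
  have X_monom: "[:0, 1:] = (monom 1 1 :: 'a poly)" by (simp add: monom_Suc)
  have "[:-0, 1:] ^ 2 dvd p" using order_divides[of 0 2 p] ord by simp
  moreover have "[:-0, 1:] ^ 2 = (monom 1 2 :: 'a poly)" unfolding minus_zero X_monom by (simp add: monom_power)
  ultimately have "monom 1 2 dvd p" by simp
  then obtain q where q: "p = monom 1 2 * q" by (auto elim: dvdE)
  have coeff_p: "coeff p k = (if k < 2 then 0 else coeff q (k - 2))" for k
    unfolding q coeff_monom_mult by simp
  show "coeff p 0 = 0" "coeff p 1 = 0" using coeff_p by auto
  show "coeff p 2 \<noteq> 0"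
  proof
    assume "coeff p 2 = 0"
    then have "poly q 0 = 0" using coeff_p[of 2] by (simp add: poly_0_coeff_0)
    then have "[:0, 1:] dvd q" using dvd_iff_poly_eq_0[of 0 q] by simp
    then obtain r where "q = [:0, 1:] * r" by (auto elim: dvdE)
    moreover have "[:-0, 1:] ^ 3 = (monom 1 2 * [:0, 1:] :: 'a poly)" unfolding minus_zero X_monom by (simp add: monom_power mult_monom)
    ultimately have "p = [:-0, 1:] ^ 3 * r" unfolding q by (simp add: mult.assoc)
    then have "[:-0, 1:] ^ 3 dvd p" by simp
    then have "3 \<le> order 0 p" using order_divides[of 0 3 p] p by simp
    then show False using ord by simp
  qed
qed

locale null_generator_chart = metric_chart +
  fixes k :: "real^3 \<Rightarrow> complex^3"
  assumes null_generator: "null_generator U G k"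
begin

lemma differentiable_k: "y \<in> U \<Longrightarrow> (\<lambda>z. k z $ a) differentiable (at y)"
  using null_generator smooth_on_differentiable unfolding null_generator_def smooth_field_def by blast

definition nabla_k :: "real^3 \<Rightarrow> 3 \<Rightarrow> 3 \<Rightarrow> complex" where
  "nabla_k x c a = pd c (\<lambda>y. k y $ a) x + (\<Sum>b\<in>UNIV. complex_of_real (christ G a c b x) * k x $ b)"

abbreviation gC :: "real^3 \<Rightarrow> 3 \<Rightarrow> 3 \<Rightarrow> complex" where
  "gC y a b \<equiv> complex_of_real (G y $ a $ b)"

lemma gc_eq_bilin: "gc G y u v = bilin (gC y) (($) u) (($) v)"
  by (simp add: gc_def bilin_def)

lemma Phic_eq_bilin: "Phic G y u v = bilin (\<lambda>a b. complex_of_real (Phi G a b y)) (($) u) (($) v)"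
  by (simp add: Phic_def bilin_def)

lemma principal_null_frame_at:
  assumes y: "y \<in> U" and mult: "principal_mult G y (k y) 2"
  obtains l n where "principal_null_frame (gC y) (\<lambda>a b. complex_of_real (ginv G y $ a $ b))
      (($) (k y)) (($) l) (($) n) (\<lambda>a b. complex_of_real (Phi G a b y))"
proof -
  obtain l n where frame: "null_frame G y (k y) l n" and p: "phi_poly G y (k y) l n \<noteq> 0"
    and ord: "order 0 (phi_poly G y (k y) l n) = 2"
    using mult unfolding principal_mult_def by blast
  from order_0_eq_2_coeffs[OF p ord]
  have Phic: "Phic G y (k y) (k y) = 0" "Phic G y (k y) n = 0" "Phic G y (k y) l \<noteq> 0"
    unfolding phi_poly_def by (auto simp: numeral_2_eq_2)
  show ?thesis
  proof (rule that[of l n], unfold_locales)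
    show "gC y a b = gC y b a" for a b using G_sym[OF y] by simp
    show "(\<Sum>b\<in>UNIV. gC y a b * complex_of_real (ginv G y $ b $ c)) = (if a = c then 1 else 0)" for a c
      using G_ginv[OF y] by (simp flip: of_real_mult of_real_sum)
    show "(\<Sum>b\<in>UNIV. complex_of_real (ginv G y $ a $ b) * gC y b c) = (if a = c then 1 else 0)" for a c
      using ginv_G[OF y] by (simp flip: of_real_mult of_real_sum)
    show "complex_of_real (Phi G a b y) = complex_of_real (Phi G b a y)" for a b
      using Phi_sym[OF y] by simp
    show "(\<Sum>a\<in>UNIV. \<Sum>b\<in>UNIV. complex_of_real (ginv G y $ a $ b) * complex_of_real (Phi G a b y)) = 0"
      using trace_Phi[OF y] by (simp flip: of_real_mult of_real_sum)
  qed (use frame Phic in \<open>simp_all add: null_frame_def gc_eq_bilin Phic_eq_bilin\<close>)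
qed

lemma pd_Phi_eq_nablaPhi:
  "pd c (Phi G a b) x = nablaPhi G c a b x + (\<Sum>e\<in>UNIV. christ G e c a x * Phi G e b x)
     + (\<Sum>e\<in>UNIV. christ G e c b x * Phi G a e x)"
  by (simp add: nablaPhi_def)

lemma deriv_null_at:
  assumes x: "x \<in> U"
  shows "bilin (gC x) (($) (k x)) (nabla_k x c) = 0"
proof -
  have "pd c (\<lambda>y. gc G y (k y) (k y)) x = pd c (\<lambda>y. 0) x"
    by (rule pd_cong[OF open_U x]) (use null_generator in \<open>simp add: null_generator_def\<close>)
  moreover have "pd c (\<lambda>y. gc G y (k y) (k y)) x = 2 * bilin (gC x) (($) (k x)) (nabla_k x c)"
    unfolding gc_def bilin_def using x
    by (simp add: pd_rules pd_of_real differentiable_at differentiable_k metric_compat nabla_k_def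
        sum_3 algebra_simps christ_sym G_sym)
  ultimately show ?thesis by (simp add: pd_const)
qed

context
  assumes principal: "\<forall>y\<in>U. principal_mult G y (k y) 2"
begin

lemma principal_null_frame_everywhere:
  assumes "y \<in> U"
  obtains l n where "principal_null_frame (gC y) (\<lambda>a b. complex_of_real (ginv G y $ a $ b))
      (($) (k y)) (($) l) (($) n) (\<lambda>a b. complex_of_real (Phi G a b y))"
  using principal_null_frame_at[OF assms] principal assms by blast

lemma Phi_kk_zero: "y \<in> U \<Longrightarrow> bilin (\<lambda>a b. complex_of_real (Phi G a b y)) (($) (k y)) (($) (k y)) = 0"
  by (elim principal_null_frame_everywhere principal_null_frame.P_kk)

lemma deriv_Phi_kk_at:
  assumes x: "x \<in> U"
  shows "(\<Sum>a\<in>UNIV. \<Sum>b\<in>UNIV. complex_of_real (nablaPhi G c a b x) * k x $ a * k x $ b)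
     + 2 * (\<Sum>a\<in>UNIV. \<Sum>b\<in>UNIV. complex_of_real (Phi G a b x) * nabla_k x c a * k x $ b) = 0"
proof -
  have "pd c (\<lambda>y. bilin (\<lambda>a b. complex_of_real (Phi G a b y)) (($) (k y)) (($) (k y))) x = pd c (\<lambda>y. 0) x"
    by (rule pd_cong[OF open_U x]) (rule Phi_kk_zero)
  moreover have "pd c (\<lambda>y. bilin (\<lambda>a b. complex_of_real (Phi G a b y)) (($) (k y)) (($) (k y))) x
     = (\<Sum>a\<in>UNIV. \<Sum>b\<in>UNIV. complex_of_real (nablaPhi G c a b x) * k x $ a * k x $ b)
       + 2 * (\<Sum>a\<in>UNIV. \<Sum>b\<in>UNIV. complex_of_real (Phi G a b x) * nabla_k x c a * k x $ b)"
    unfolding bilin_def using x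
    by (simp add: pd_rules pd_of_real differentiable_at differentiable_k pd_Phi_eq_nablaPhi nabla_k_def
        sum_3 algebra_simps christ_sym Phi_sym)
  ultimately show ?thesis by (simp add: pd_const)
qed

lemma deriv_aligned_at:
  assumes x: "x \<in> U"
  shows "lower (gC x) (nabla_k x e) a * (\<Sum>c\<in>UNIV. complex_of_real (Phi G b c x) * k x $ c)
      + lower (gC x) (($) (k x)) a * (\<Sum>c\<in>UNIV. complex_of_real (nablaPhi G e b c x) * k x $ c)
      + lower (gC x) (($) (k x)) a * (\<Sum>c\<in>UNIV. complex_of_real (Phi G b c x) * nabla_k x e c)
    - (lower (gC x) (nabla_k x e) b * (\<Sum>c\<in>UNIV. complex_of_real (Phi G a c x) * k x $ c)
      + lower (gC x) (($) (k x)) b * (\<Sum>c\<in>UNIV. complex_of_real (nablaPhi G e a c x) * k x $ c)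
      + lower (gC x) (($) (k x)) b * (\<Sum>c\<in>UNIV. complex_of_real (Phi G a c x) * nabla_k x e c)) = 0"
proof -
  define A where "A y a = lower (gC y) (($) (k y)) a" for y a
  define B where "B y b = (\<Sum>c\<in>UNIV. complex_of_real (Phi G b c y) * k y $ c)" for y b
  define nA where "nA a = lower (gC x) (nabla_k x e) a" for a
  define nB where "nB b = (\<Sum>c\<in>UNIV. complex_of_real (nablaPhi G e b c x) * k x $ c)
    + (\<Sum>c\<in>UNIV. complex_of_real (Phi G b c x) * nabla_k x e c)" for b
  have aligned: "A y a * B y b - A y b * B y a = 0" if "y \<in> U" for y a b
    unfolding A_def B_def using that by (elim principal_null_frame_everywhere principal_null_frame.P_k_aligned)
  have dA: "pd e (\<lambda>y. A y a) x = nA a + (\<Sum>f\<in>UNIV. complex_of_real (christ G f e a x) * A x f)" for a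
    unfolding A_def nA_def lower_def using x
    by (simp add: pd_rules pd_of_real differentiable_at differentiable_k metric_compat nabla_k_def
        sum_3 algebra_simps christ_sym G_sym)
  have dB: "pd e (\<lambda>y. B y b) x = nB b + (\<Sum>f\<in>UNIV. complex_of_real (christ G f e b x) * B x f)" for b
    unfolding B_def nB_def using x
    by (simp add: pd_rules pd_of_real differentiable_at differentiable_k pd_Phi_eq_nablaPhi nabla_k_def
        sum_3 algebra_simps christ_sym Phi_sym)
  have "(\<lambda>y. A y a) differentiable (at x)" "(\<lambda>y. B y a) differentiable (at x)" for a
    unfolding A_def B_def lower_def using x by (simp_all add: differentiable_at differentiable_k)
  moreover have "pd e (\<lambda>y. A y a * B y b - A y b * B y a) x = pd e (\<lambda>y. 0) x"
    by (rule pd_cong[OF open_U x]) (rule aligned)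
  ultimately have "pd e (\<lambda>y. A y a) x * B x b + A x a * pd e (\<lambda>y. B y b) x
      - (pd e (\<lambda>y. A y b) x * B x a + A x b * pd e (\<lambda>y. B y a) x) = 0"
    by (simp add: pd_diff pd_mult pd_const algebra_simps)
  text \<open>The Christoffel terms cancel because they are the derivative terms of the vanishing
    expression \<open>A\<^sub>a B\<^sub>b - A\<^sub>b B\<^sub>a\<close> at \<open>x\<close> itself.\<close>
  moreover have "(\<Sum>f\<in>UNIV. complex_of_real (christ G f e a x) * (A x f * B x b - A x b * B x f))
      + (\<Sum>f\<in>UNIV. complex_of_real (christ G f e b x) * (A x a * B x f - A x f * B x a)) = 0"
    using aligned[OF x] by simp
  ultimately have "nA a * B x b + A x a * nB b - (nA b * B x a + A x b * nB a) = 0"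
    unfolding dA dB sum_3 by (simp add: algebra_simps)
  then show ?thesis unfolding nA_def nB_def A_def B_def by (simp add: algebra_simps)
qed

lemma nabla_k_perp:
  assumes x: "x \<in> U"
    and cotton: "\<forall>c. (\<Sum>a\<in>UNIV. \<Sum>b\<in>UNIV. k x $ a * k x $ b *
            complex_of_real (cotton G a b c x + 3 * G x $ b $ c * pd a (Sfun G) x)) = 0"
    and X: "gc G x X (k x) = 0" and Y: "gc G x Y (k x) = 0"
  shows "bilin (gC x) (\<lambda>a. \<Sum>c\<in>UNIV. X $ c * nabla_k x c a) (($) Y) = 0"
proof -
  obtain l n where "principal_null_frame (gC x) (\<lambda>a b. complex_of_real (ginv G x $ a $ b))
      (($) (k x)) (($) l) (($) n) (\<lambda>a b. complex_of_real (Phi G a b x))"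
    using principal_null_frame_everywhere[OF x] .
  then interpret principal_null_frame "gC x" "\<lambda>a b. complex_of_real (ginv G x $ a $ b)"
      "($) (k x)" "($) l" "($) n" "\<lambda>a b. complex_of_real (Phi G a b x)" .
  interpret principal_null_frame_derivatives "gC x" "\<lambda>a b. complex_of_real (ginv G x $ a $ b)"
      "($) (k x)" "($) l" "($) n" "\<lambda>a b. complex_of_real (Phi G a b x)"
      "\<lambda>d a b. complex_of_real (nablaPhi G d a b x)" "\<lambda>a. complex_of_real (pd a (Sfun G) x)" "nabla_k x"
  proof unfold_locales
    show "(\<Sum>a\<in>UNIV. \<Sum>b\<in>UNIV. k x $ a * k x $ b * (- (complex_of_real (nablaPhi G b c a x)
        - complex_of_real (nablaPhi G c b a x)) + gC x a b * complex_of_real (pd c (Sfun G) x)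
        - gC x a c * complex_of_real (pd b (Sfun G) x) + 3 * gC x b c * complex_of_real (pd a (Sfun G) x))) = 0"
      for c using cotton by (simp add: cotton_def)
    show "(\<Sum>a\<in>UNIV. \<Sum>d\<in>UNIV. complex_of_real (ginv G x $ a $ d) * complex_of_real (nablaPhi G d a b x))
        = 2 * complex_of_real (pd b (Sfun G) x)" for b
      using arg_cong[OF contracted_bianchi[OF x, of b], of complex_of_real] by simp
  qed (use deriv_Phi_kk_at[OF x] deriv_aligned_at[OF x] deriv_null_at[OF x] in simp_all)
  show ?thesis
    using along_perp[of "($) X" "($) Y"] X Y by (simp add: along_def[abs_def] gc_eq_bilin)
qed

end

lemma covD_inner_generator:
  assumes x: "x \<in> U" and Y: "smooth_field U Y" and YK: "\<forall>y\<in>U. gc G y (Y y) (k y) = 0"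
  shows "gc G x (covD G X Y x) (k x) = - bilin (gC x) (\<lambda>a. \<Sum>c\<in>UNIV. X x $ c * nabla_k x c a) (($) (Y x))"
proof -
  have dY: "(\<lambda>z. Y z $ a) differentiable (at x)" for a
    using Y smooth_on_differentiable x unfolding smooth_field_def by blast
  have "pd c (\<lambda>y. gc G y (Y y) (k y)) x = pd c (\<lambda>y. 0) x" for c
    by (rule pd_cong[OF open_U x]) (use YK in auto)
  then have "(\<Sum>c\<in>UNIV. X x $ c * pd c (\<lambda>y. gc G y (Y y) (k y)) x) = 0" by (simp add: pd_const)
  moreover have "(\<Sum>c\<in>UNIV. X x $ c * pd c (\<lambda>y. gc G y (Y y) (k y)) x)
     = gc G x (covD G X Y x) (k x) + bilin (gC x) (\<lambda>a. \<Sum>c\<in>UNIV. X x $ c * nabla_k x c a) (($) (Y x))"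
    unfolding gc_def bilin_def covD_def using x
    by (simp add: pd_rules pd_of_real differentiable_at differentiable_k dY metric_compat nabla_k_def
        sum_3 algebra_simps christ_sym G_sym)
  ultimately show ?thesis by (simp add: eq_neg_iff_add_eq_0)
qed

end

theorem mainTheorem4:
  fixes U :: "(real^3) set" and G :: "real^3 \<Rightarrow> real^3^3" and k :: "real^3 \<Rightarrow> complex^3"
  assumes "smooth_metric U G"
    and "null_generator U G k"
    and "\<forall>x\<in>U. principal_mult G x (k x) 2"
    and "\<forall>x\<in>U. \<forall>c. (\<Sum>a\<in>UNIV. \<Sum>b\<in>UNIV. k x $ a * k x $ b *
            complex_of_real (cotton G a b c x + 3 * G x $ b $ c * pd a (Sfun G) x)) = 0"
  shows "co_geodetic U G k"
proof -
  interpret null_generator_chart U G k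
    by unfold_locales (fact assms(1), fact assms(2))
  show ?thesis unfolding co_geodetic_def
  proof (intro allI impI ballI)
    fix X Y Z x
    assume H: "smooth_field U X \<and> smooth_field U Y \<and> smooth_field U Z \<and>
        (\<forall>x\<in>U. gc G x (X x) (k x) = 0 \<and> gc G x (Y x) (k x) = 0 \<and> (\<exists>c. Z x = c *s k x))"
      and x: "x \<in> U"
    then obtain c where Z: "Z x = c *s k x" by blast
    have Y: "smooth_field U Y" and Y_perp: "\<forall>y\<in>U. gc G y (Y y) (k y) = 0" using H by blast+
    have "bilin (gC x) (\<lambda>a. \<Sum>c\<in>UNIV. X x $ c * nabla_k x c a) (($) (Y x)) = 0"
      using nabla_k_perp[OF assms(3) x bspec[OF assms(4) x]] H x by blast
    then have "gc G x (covD G X Y x) (k x) = 0"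
      using covD_inner_generator[OF x Y Y_perp] by simp
    moreover have "gc G x (covD G X Y x) (Z x) = c * gc G x (covD G X Y x) (k x)"
      unfolding Z gc_def sum_3 by (simp add: algebra_simps)
    ultimately show "gc G x (covD G X Y x) (Z x) = 0" by simp
  qed
qed

end
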